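(* Let $C$ be a quasi-category and $c\in C_0$ a vertex. Then for every $n\geq2$ the homotopy monoid $\tau_n(C^e,c)$ is a group.
   Context: A stratified simplicial set is a pair $(X,tX)$ where $X$ is a simplicial set and $tX$ is a set of simplices of $X$ (thin simplices) containing all degenerate simplices and no $0$-simplices; stratified maps are simplicial maps preserving thin simplices. For a quasi-category $C$, $C^e$ is the stratified simplicial set with underlying simplicial set $C$ whose thin simplices are the degenerate simplices, all simplices of dimension $\ge 2$, and the $1$-simplices of $C$ that are equivalences (isomorphisms in the homotopy category of $C$); $C^e$ is a weak complicial set. In particular every simplex of $C^e$ of dimension $\geq 2$ is thin. For $n\ge1$, $\Delta[n]_t$ is $\Delta[n]$ with thin simplices the degenerate ones and $\mathrm{Id}_{[n]}$. For $k\in[n]$, $\Delta^k[n]$ is $\Delta[n]$ with thin simplices the degenerate ones and all $\alpha:[m]\to[n]$ with $\{k-1,k,k+1\}\cap[n]\subset\mathrm{Im}(\alpha)$. The product $X\circledast Y$ has underlying simplicial set $X\times Y$, with $(x,y)$ thin iff $x$ and $y$ are thin. For stratified maps $f,g:A\to X$ and an inclusion $B\hookrightarrow A$ with $f|_B=g|_B$, $f\sim_B g$ means there is a stratified map $H:A\circledast\Delta[1]_t\to X$ with $H|_{A\times\{0\}}=f$, $H|_{A\times\{1\}}=g$ and $H|_{B\circledast\Delta[1]_t}=f|_B\circ\mathrm{proj}_B$; $n$-simplices are regarded as stratified maps from $\Delta[n]$ with only degenerate simplices thin. For a weak complicial set $X$, vertex $x$, and $n\ge1$, $\tau_n(X,x)$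 is the set of $\sim_{\partial\Delta[n]}$-classes of $n$-simplices $\alpha$ whose restriction to $\partial\Delta[n]$ is constant at $x$, with multiplication $[\alpha][\beta]=[d_n\theta]$ where $\theta:\Delta^n[n+1]\to X$ is any stratified map with $d_{n-1}\theta=\alpha$, $d_{n+1}\theta=\beta$, and $d_i\theta$ constant at $x$ for $i\notin\{n-1,n,n+1\}$; this is a monoid with unit the class of the constant simplex at $x$. *)

theory Defs
  imports "HOL-Algebra.Group"
begin

text \<open>A simplicial operator alpha : [m] -> [n] is a monotone map, represented
  extensionally as a function nat => nat that is 0 outside {0..m}.\<close>

definition ops :: "nat \<Rightarrow> nat \<Rightarrow> (nat \<Rightarrow> nat) set" where
  "ops m n = {\<alpha>. (\<forall>i\<le>m. \<alpha> i \<le> n) \<and> (\<forall>i j. i \<le> j \<longrightarrow> j \<le> m \<longrightarrow> \<alpha> i \<le> \<alpha> j)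
                \<and> (\<forall>i. m < i \<longrightarrow> \<alpha> i = 0)}"

definition idop :: "nat \<Rightarrow> nat \<Rightarrow> nat" where
  "idop n = (\<lambda>i. if i \<le> n then i else 0)"

definition cmp :: "nat \<Rightarrow> (nat \<Rightarrow> nat) \<Rightarrow> (nat \<Rightarrow> nat) \<Rightarrow> nat \<Rightarrow> nat" where
  "cmp k \<alpha> \<beta> = (\<lambda>i. if i \<le> k then \<alpha> (\<beta> i) else 0)"

text \<open>Simp X n = set of n-simplices; Op X m n alpha x = x.alpha for alpha : [m] -> [n].\<close>
record 'a sset =
  Simp :: "nat \<Rightarrow> 'a set"
  Op :: "nat \<Rightarrow> nat \<Rightarrow> (nat \<Rightarrow> nat) \<Rightarrow> 'a \<Rightarrow> 'a"

record 'a ssset = "'a sset" +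
  Thin :: "nat \<Rightarrow> 'a set"

definition simplicial_set :: "('a, 'z) sset_scheme \<Rightarrow> bool" where
  "simplicial_set X \<longleftrightarrow>
     (\<forall>m n \<alpha> x. \<alpha> \<in> ops m n \<longrightarrow> x \<in> Simp X n \<longrightarrow> Op X m n \<alpha> x \<in> Simp X m) \<and>
     (\<forall>n x. x \<in> Simp X n \<longrightarrow> Op X n n (idop n) x = x) \<and>
     (\<forall>k m n \<alpha> \<beta> x. \<alpha> \<in> ops m n \<longrightarrow> \<beta> \<in> ops k m \<longrightarrow> x \<in> Simp X n \<longrightarrow>
        Op X k m \<beta> (Op X m n \<alpha> x) = Op X k n (cmp k \<alpha> \<beta>) x)"

definition degenerate :: "('a, 'z) sset_scheme \<Rightarrow> nat \<Rightarrow> 'a \<Rightarrow> bool" where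
  "degenerate X m x \<longleftrightarrow> (\<exists>m' < m. \<exists>\<alpha> \<in> ops m m'. \<exists>y \<in> Simp X m'. x = Op X m m' \<alpha> y)"

definition delta_face :: "nat \<Rightarrow> nat \<Rightarrow> nat \<Rightarrow> nat" where
  "delta_face m i = (\<lambda>j. if m < j then 0 else if j < i then j else Suc j)"

definition face :: "('a, 'z) sset_scheme \<Rightarrow> nat \<Rightarrow> nat \<Rightarrow> 'a \<Rightarrow> 'a" where
  "face X m i x = Op X m (Suc m) (delta_face m i) x"

definition cst :: "('a, 'z) sset_scheme \<Rightarrow> nat \<Rightarrow> 'a \<Rightarrow> 'a" where
  "cst X m x = Op X m 0 (\<lambda>i. 0) x"

definition stratified :: "'a ssset \<Rightarrow> bool" where
  "stratified X \<longleftrightarrow> simplicial_set X \<and> (\<forall>m. Thin X m \<subseteq> Simp X m) \<and>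
     (\<forall>m x. x \<in> Simp X m \<longrightarrow> degenerate X m x \<longrightarrow> x \<in> Thin X m) \<and> Thin X 0 = {}"

definition smap :: "'a ssset \<Rightarrow> 'b ssset \<Rightarrow> (nat \<Rightarrow> 'a \<Rightarrow> 'b) \<Rightarrow> bool" where
  "smap A X f \<longleftrightarrow>
     (\<forall>m a. a \<in> Simp A m \<longrightarrow> f m a \<in> Simp X m) \<and>
     (\<forall>m n \<alpha> a. \<alpha> \<in> ops m n \<longrightarrow> a \<in> Simp A n \<longrightarrow> f m (Op A m n \<alpha> a) = Op X m n \<alpha> (f n a)) \<and>
     (\<forall>m a. a \<in> Thin A m \<longrightarrow> f m a \<in> Thin X m)"

definition delta_sset :: "nat \<Rightarrow> (nat \<Rightarrow> nat) sset" where
  "delta_sset n = \<lparr>Simp = (\<lambda>m. ops m n), Op = (\<lambda>m k \<beta> \<alpha>. cmp m \<alpha> \<beta>)\<rparr>"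

definition degen_std :: "nat \<Rightarrow> nat \<Rightarrow> (nat \<Rightarrow> nat) set" where
  "degen_std n m = {\<alpha> \<in> ops m n. degenerate (delta_sset n) m \<alpha>}"

definition Delta_min :: "nat \<Rightarrow> (nat \<Rightarrow> nat) ssset" where
  "Delta_min n = \<lparr>Simp = (\<lambda>m. ops m n), Op = (\<lambda>m k \<beta> \<alpha>. cmp m \<alpha> \<beta>),
                  Thin = degen_std n\<rparr>"

definition Delta_t :: "nat \<Rightarrow> (nat \<Rightarrow> nat) ssset" where
  "Delta_t n = \<lparr>Simp = (\<lambda>m. ops m n), Op = (\<lambda>m k \<beta> \<alpha>. cmp m \<alpha> \<beta>),
                Thin = (\<lambda>m. degen_std n m \<union> (if m = n then {idop n} else {}))\<rparr>"

definition Delta_k :: "nat \<Rightarrow> nat \<Rightarrow> (nat \<Rightarrow> nat) ssset" where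
  "Delta_k k n = \<lparr>Simp = (\<lambda>m. ops m n), Op = (\<lambda>m k \<beta> \<alpha>. cmp m \<alpha> \<beta>),
                  Thin = (\<lambda>m. degen_std n m \<union>
                     {\<alpha> \<in> ops m n. {k - 1, k, k + 1} \<inter> {0..n} \<subseteq> \<alpha> ` {0..m}})\<rparr>"

definition sprod :: "'a ssset \<Rightarrow> 'b ssset \<Rightarrow> ('a \<times> 'b) ssset" where
  "sprod A B = \<lparr>Simp = (\<lambda>m. Simp A m \<times> Simp B m),
                Op = (\<lambda>m n \<alpha> p. (Op A m n \<alpha> (fst p), Op B m n \<alpha> (snd p))),
                Thin = (\<lambda>m. Thin A m \<times> Thin B m)\<rparr>"

definition yon :: "('a, 'z) sset_scheme \<Rightarrow> nat \<Rightarrow> 'a \<Rightarrow> nat \<Rightarrow> (nat \<Rightarrow> nat) \<Rightarrow> 'a" where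
  "yon X n x = (\<lambda>m \<alpha>. Op X m n \<alpha> x)"

definition boundary :: "nat \<Rightarrow> nat \<Rightarrow> (nat \<Rightarrow> nat) set" where
  "boundary n m = {\<alpha> \<in> ops m n. \<not> ({0..n} \<subseteq> \<alpha> ` {0..m})}"

definition spherical :: "'a ssset \<Rightarrow> nat \<Rightarrow> 'a \<Rightarrow> 'a set" where
  "spherical X n x = {a \<in> Simp X n. \<forall>m. \<forall>\<alpha> \<in> boundary n m. Op X m n \<alpha> a = cst X m x}"

definition htpy :: "'a ssset \<Rightarrow> nat \<Rightarrow> 'a \<Rightarrow> 'a \<Rightarrow> bool" where
  "htpy X n a b \<longleftrightarrow> (\<exists>H. smap (sprod (Delta_min n) (Delta_t 1)) X H \<and>
     (\<forall>m. \<forall>\<alpha> \<in> ops m n. H m (\<alpha>, (\<lambda>i. 0)) = Op X m n \<alpha> a) \<and>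
     (\<forall>m. \<forall>\<alpha> \<in> ops m n. H m (\<alpha>, (\<lambda>i. if i \<le> m then 1 else 0)) = Op X m n \<alpha> b) \<and>
     (\<forall>m. \<forall>\<alpha> \<in> boundary n m. \<forall>\<gamma> \<in> ops m 1. H m (\<alpha>, \<gamma>) = Op X m n \<alpha> a))"

definition tau_equiv :: "'a ssset \<Rightarrow> nat \<Rightarrow> 'a \<Rightarrow> ('a \<times> 'a) set" where
  "tau_equiv X n x =
     (let R = {(a, b). a \<in> spherical X n x \<and> b \<in> spherical X n x \<and> htpy X n a b}
      in (R \<union> R\<inverse>)\<^sup>* \<inter> (spherical X n x \<times> spherical X n x))"

definition tau_mult :: "'a ssset \<Rightarrow> nat \<Rightarrow> 'a \<Rightarrow> 'a set \<Rightarrow> 'a set \<Rightarrow> 'a set" where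
  "tau_mult X n x A B = (SOME Cl. \<exists>a \<in> A. \<exists>b \<in> B. \<exists>\<theta> \<in> Simp X (Suc n).
      smap (Delta_k n (Suc n)) X (yon X (Suc n) \<theta>) \<and>
      face X n (n - 1) \<theta> = a \<and> face X n (Suc n) \<theta> = b \<and>
      (\<forall>i \<le> Suc n. i \<notin> {n - 1, n, Suc n} \<longrightarrow> face X n i \<theta> = cst X n x) \<and>
      Cl = tau_equiv X n x `` {face X n n \<theta>})"

definition tau :: "'a ssset \<Rightarrow> nat \<Rightarrow> 'a \<Rightarrow> 'a set monoid" where
  "tau X n x = \<lparr>carrier = spherical X n x // tau_equiv X n x,
                mult = tau_mult X n x,
                one = tau_equiv X n x `` {cst X n x}\<rparr>"

definition quasi_category :: "'a sset \<Rightarrow> bool" where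
  "quasi_category C \<longleftrightarrow> simplicial_set C \<and>
     (\<forall>n k x. 2 \<le> n \<longrightarrow> 0 < k \<longrightarrow> k < n \<longrightarrow>
        (\<forall>i \<le> n. i \<noteq> k \<longrightarrow> x i \<in> Simp C (n - 1)) \<longrightarrow>
        (\<forall>i j. i < j \<longrightarrow> j \<le> n \<longrightarrow> i \<noteq> k \<longrightarrow> j \<noteq> k \<longrightarrow>
            face C (n - 2) i (x j) = face C (n - 2) (j - 1) (x i)) \<longrightarrow>
        (\<exists>y \<in> Simp C n. \<forall>i \<le> n. i \<noteq> k \<longrightarrow> face C (n - 1) i y = x i))"

text \<open>homotopy of parallel 1-simplices h, h' (Boardman-Vogt homotopy category)\<close>
definition qc_htpc :: "'a sset \<Rightarrow> 'a \<Rightarrow> 'a \<Rightarrow> bool" where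
  "qc_htpc C h h' \<longleftrightarrow> (\<exists>\<rho> \<in> Simp C 2. face C 1 0 \<rho> = cst C 1 (face C 0 0 h) \<and>
                          face C 1 1 \<rho> = h' \<and> face C 1 2 \<rho> = h)"

text \<open>f : x -> y is an isomorphism in the homotopy category ho(C)\<close>
definition qc_equiv :: "'a sset \<Rightarrow> 'a \<Rightarrow> bool" where
  "qc_equiv C f \<longleftrightarrow> f \<in> Simp C 1 \<and>
     (\<exists>g \<in> Simp C 1. \<exists>\<sigma> \<in> Simp C 2. \<exists>\<tau> \<in> Simp C 2.
        face C 0 0 g = face C 0 1 f \<and> face C 0 1 g = face C 0 0 f \<and>
        face C 1 2 \<sigma> = f \<and> face C 1 0 \<sigma> = g \<and>
        qc_htpc C (face C 1 1 \<sigma>) (cst C 1 (face C 0 1 f)) \<and>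
        face C 1 2 \<tau> = g \<and> face C 1 0 \<tau> = f \<and>
        qc_htpc C (face C 1 1 \<tau>) (cst C 1 (face C 0 0 f)))"

definition Ce :: "'a sset \<Rightarrow> 'a ssset" where
  "Ce C = \<lparr>Simp = Simp C, Op = Op C,
           Thin = (\<lambda>m. {x \<in> Simp C m. degenerate C m x \<or> 2 \<le> m \<or> (m = 1 \<and> qc_equiv C x)})\<rparr>"

end

theory Submission
  imports Defs
begin

text \<open>Call an \<open>n\<close>-simplex of \<open>C\<close> all of whose faces are constant at \<open>c\<close> a sphere, and an
  \<open>(n+1)\<close>-simplex whose faces other than those at positions \<open>k, k+1, k+2\<close> are constant a triangle
  relating the spheres in those positions. For \<open>k < n\<close>, inner horns of dimensions \<open>n+1\<close> and
  \<open>n+2\<close> make spheres and triangles behave like the morphisms and 2-simplices of a quasi-category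
  with one object; this gives a composition of spheres that is unique and associative up to the
  relation "\<open>x\<close> and \<open>y\<close> span a triangle with constant third face". A homotopy rel boundary,
  restricted to the \<open>n+1\<close> nondegenerate \<open>(n+1)\<close>-simplices of the prism \<open>\<Delta>[n] \<times> \<Delta>[1]\<close>, is a
  chain of bigons, i.e. simplices with only two adjacent non-constant faces, and a bigon in any
  position is a homotopy in the former sense; conversely one bigon spreads over the prism to a
  homotopy. Hence \<open>\<tau>\<^sub>n(C\<^sup>e, c)\<close> is the monoid of spheres up to homotopy under triangle composition,
  and a left inverse comes from one more inner horn filler. Thinness imposes nothing: the
  simplices of \<open>C\<^sup>e\<close> of dimension at least 2 are all thin, and the thin edges that arise are
  degenerate.\<close>

lemma ops_le: "\<alpha> \<in> ops m N \<Longrightarrow> i \<le> m \<Longrightarrow> \<alpha> i \<le> N"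
  unfolding ops_def by auto

lemma ops_beyond: "\<alpha> \<in> ops m N \<Longrightarrow> \<not> i \<le> m \<Longrightarrow> \<alpha> i = 0"
  unfolding ops_def by auto

lemma const_zero_ops: "(\<lambda>i. 0) \<in> ops m 0"
  by (simp add: ops_def)

lemma idop_ops: "idop N \<in> ops N N"
  unfolding ops_def idop_def by auto

lemma delta_face_ops: "delta_face N j \<in> ops N (Suc N)"
  by (auto simp: ops_def delta_face_def)

lemma cmp_ops: "\<alpha> \<in> ops m N \<Longrightarrow> \<beta> \<in> ops k m \<Longrightarrow> cmp k \<alpha> \<beta> \<in> ops k N"
  unfolding ops_def cmp_def by auto

lemma cmp_const_zero: "cmp m (\<lambda>i. 0) \<beta> = (\<lambda>i. 0)"
  by (auto simp: cmp_def)

lemma cmp_idop: "\<alpha> \<in> ops m N \<Longrightarrow> cmp m (idop N) \<alpha> = \<alpha>"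
  unfolding fun_eq_iff cmp_def idop_def ops_def by auto

lemma cmp_delta_face_top: "\<alpha> \<in> ops m N \<Longrightarrow> cmp m (delta_face N (Suc N)) \<alpha> = \<alpha>"
  unfolding fun_eq_iff cmp_def delta_face_def ops_def by auto

lemma delta_face_comm:
  "i < j \<Longrightarrow> cmp N (delta_face (Suc N) j) (delta_face N i) = cmp N (delta_face (Suc N) i) (delta_face N (j - 1))"
  unfolding fun_eq_iff cmp_def delta_face_def by (auto split: if_splits)

lemma ops_factor_delta_face:
  assumes \<alpha>: "\<alpha> \<in> ops m (Suc N)" and v: "v \<le> Suc N" and miss: "\<forall>i\<le>m. \<alpha> i \<noteq> v"
  obtains \<beta> where "\<beta> \<in> ops m N" "cmp m (delta_face N v) \<beta> = \<alpha>"
proof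
  define \<beta> where "\<beta> = (\<lambda>i. if i \<le> m then (if \<alpha> i < v then \<alpha> i else \<alpha> i - 1) else 0)"
  have le: "\<beta> i \<le> N" if "i \<le> m" for i
    using ops_le[OF \<alpha> that] miss that v unfolding \<beta>_def by auto
  have "\<beta> i \<le> \<beta> j" if ij: "i \<le> j" "j \<le> m" for i j
  proof -
    have "\<alpha> i \<le> \<alpha> j" using \<alpha> ij unfolding ops_def by blast
    moreover have "\<alpha> i \<noteq> v" "\<alpha> j \<noteq> v" using miss ij by auto
    ultimately show ?thesis using ij unfolding \<beta>_def by auto
  qed
  with le show "\<beta> \<in> ops m N"
    unfolding ops_def by (auto simp: \<beta>_def)
  show "cmp m (delta_face N v) \<beta> = \<alpha>"
  proof
    fix i
    show "cmp m (delta_face N v) \<beta> i = \<alpha> i"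
      using le[of i] miss ops_beyond[OF \<alpha>, of i]
      unfolding cmp_def delta_face_def \<beta>_def by auto
  qed
qed

lemma boundary_iff: "\<alpha> \<in> boundary N m \<longleftrightarrow> \<alpha> \<in> ops m N \<and> (\<exists>v\<le>N. \<forall>i\<le>m. \<alpha> i \<noteq> v)"
  unfolding boundary_def by (auto simp: subset_iff image_iff Bex_def)

lemma delta_face_boundary: "j \<le> Suc N \<Longrightarrow> delta_face N j \<in> boundary (Suc N) N"
  unfolding boundary_iff using delta_face_ops by (intro conjI exI[of _ j]) (auto simp: delta_face_def)

definition codegeneracy :: "nat \<Rightarrow> nat \<Rightarrow> nat \<Rightarrow> nat" where
  "codegeneracy N k = (\<lambda>i. if i \<le> Suc N then (if i \<le> k then i else i - 1) else 0)"

lemma codegeneracy_ops: "k \<le> N \<Longrightarrow> codegeneracy N k \<in> ops (Suc N) N"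
  unfolding ops_def codegeneracy_def by auto

lemma codegeneracy_delta_face: "j = k \<or> j = Suc k \<Longrightarrow> cmp N (codegeneracy N k) (delta_face N j) = idop N"
  unfolding fun_eq_iff cmp_def codegeneracy_def delta_face_def idop_def by auto

lemma codegeneracy_delta_face_boundary:
  assumes "k \<le> N" "j \<le> Suc N" "j \<noteq> k" "j \<noteq> Suc k"
  shows "cmp N (codegeneracy N k) (delta_face N j) \<in> boundary N N"
  unfolding boundary_iff
proof
  show "cmp N (codegeneracy N k) (delta_face N j) \<in> ops N N"
    by (rule cmp_ops[OF codegeneracy_ops[OF assms(1)] delta_face_ops])
  show "\<exists>v\<le>N. \<forall>i\<le>N. cmp N (codegeneracy N k) (delta_face N j) i \<noteq> v"
  proof (intro exI[of _ "if j < k then j else j - 1"] conjI allI impI)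
    show "(if j < k then j else j - 1) \<le> N"
      using assms by auto
    show "cmp N (codegeneracy N k) (delta_face N j) i \<noteq> (if j < k then j else j - 1)" if "i \<le> N" for i
      using assms that unfolding cmp_def codegeneracy_def delta_face_def by auto
  qed
qed

definition step :: "nat \<Rightarrow> nat \<Rightarrow> nat \<Rightarrow> nat" where
  "step N k = (\<lambda>i. if i \<le> N then (if i < k then 0 else 1) else 0)"

lemma step_ops: "step N k \<in> ops N 1"
  unfolding ops_def step_def by auto

lemma step_delta_face: "j = k \<or> j = Suc k \<Longrightarrow> cmp N (step (Suc N) (Suc k)) (delta_face N j) = step N j"
  unfolding fun_eq_iff cmp_def step_def delta_face_def by auto

lemma step_zero: "step N 0 = (\<lambda>i. if i \<le> N then 1 else 0)"
  unfolding fun_eq_iff step_def by auto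

lemma step_top: "step N (Suc N) = (\<lambda>i. 0)"
  unfolding fun_eq_iff step_def by auto

text \<open>The prism \<open>\<Delta>[N] \<times> \<Delta>[1]\<close> collapsed onto \<open>\<Delta>[N+1]\<close>: the vertex \<open>(i, \<epsilon>)\<close> goes to \<open>i\<close>,
  except that \<open>(N, 1)\<close> goes to \<open>N + 1\<close>.\<close>
definition prism :: "nat \<Rightarrow> nat \<Rightarrow> (nat \<Rightarrow> nat) \<Rightarrow> (nat \<Rightarrow> nat) \<Rightarrow> nat \<Rightarrow> nat" where
  "prism N m \<alpha> \<gamma> =
     (\<lambda>i. if i \<le> m then (if \<gamma> i = 0 then \<alpha> i else if \<alpha> i < N then \<alpha> i else Suc N) else 0)"

lemma prism_ops:
  assumes \<alpha>: "\<alpha> \<in> ops m N" and \<gamma>: "\<gamma> \<in> ops m 1"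
  shows "prism N m \<alpha> \<gamma> \<in> ops m (Suc N)"
proof -
  have "prism N m \<alpha> \<gamma> i \<le> prism N m \<alpha> \<gamma> j" if ij: "i \<le> j" "j \<le> m" for i j
  proof -
    have "\<alpha> i \<le> \<alpha> j" "\<gamma> i \<le> \<gamma> j" using \<alpha> \<gamma> ij unfolding ops_def by blast+
    then show ?thesis using ij ops_le[OF \<alpha>, of i] unfolding prism_def by auto
  qed
  then show ?thesis
    using ops_le[OF \<alpha>] unfolding ops_def prism_def by (auto intro: le_SucI)
qed

lemma prism_cmp: "\<beta> \<in> ops m K \<Longrightarrow> prism N m (cmp m \<alpha> \<beta>) (cmp m \<gamma> \<beta>) = cmp m (prism N K \<alpha> \<gamma>) \<beta>"
  unfolding fun_eq_iff by (auto simp: prism_def cmp_def dest: ops_le)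

lemma prism_zero: "\<alpha> \<in> ops m N \<Longrightarrow> prism N m \<alpha> (\<lambda>i. 0) = \<alpha>"
  unfolding fun_eq_iff by (auto simp: prism_def ops_beyond)

lemma prism_one: "\<alpha> \<in> ops m N \<Longrightarrow> prism N m \<alpha> (\<lambda>i. if i \<le> m then 1 else 0) = cmp m (delta_face N N) \<alpha>"
  unfolding fun_eq_iff by (auto simp: prism_def cmp_def delta_face_def dest: ops_le)

lemma prism_avoiding_top:
  assumes \<alpha>: "\<alpha> \<in> ops m N" and "\<forall>i\<le>m. \<alpha> i \<noteq> N"
  shows "prism N m \<alpha> \<gamma> = \<alpha>"
proof
  fix i
  show "prism N m \<alpha> \<gamma> i = \<alpha> i"
    using ops_le[OF \<alpha>, of i] ops_beyond[OF \<alpha>, of i] assms(2) unfolding prism_def by (cases "i \<le> m") auto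
qed

lemma prism_misses: "\<forall>i\<le>m. \<alpha> i \<noteq> v \<Longrightarrow> v < N \<Longrightarrow> \<forall>i\<le>m. prism N m \<alpha> \<gamma> i \<noteq> v"
  unfolding prism_def by auto

lemma prism_degenerate_edge:
  assumes "\<alpha> 0 = \<alpha> 1" and "2 \<le> N"
  shows "\<exists>v<N. \<forall>i\<le>1. prism N 1 \<alpha> \<gamma> i \<noteq> v"
proof -
  have const: "\<alpha> i = \<alpha> 0" if "i \<le> 1" for i
  proof -
    have "i = 0 \<or> i = 1" using that by linarith
    then show ?thesis using assms(1) by metis
  qed
  show ?thesis
  proof (cases "\<alpha> 0 < N")
    case True
    have "prism N 1 \<alpha> \<gamma> i = \<alpha> 0" if "i \<le> 1" for i
      using const[OF that] True that unfolding prism_def by simp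
    moreover have "(if \<alpha> 0 = 0 then 1 else 0) < N" using assms(2) by simp
    moreover have "\<alpha> 0 \<noteq> (if \<alpha> 0 = 0 then 1 else 0)" by simp
    ultimately show ?thesis by metis
  next
    case False
    have "prism N 1 \<alpha> \<gamma> i \<noteq> 0" if "i \<le> 1" for i
      using const[OF that] False that assms(2) unfolding prism_def by simp
    moreover have "(0::nat) < N" using assms(2) by simp
    ultimately show ?thesis by metis
  qed
qed

lemma degen_std_0: "degen_std N 0 = {}"
  unfolding degen_std_def degenerate_def by auto

lemma degen_std_1_factor:
  "\<alpha> \<in> degen_std N 1 \<Longrightarrow> \<exists>y \<in> ops 0 N. \<exists>\<beta> \<in> ops 1 0. \<alpha> = cmp 1 y \<beta>"
  unfolding degen_std_def degenerate_def delta_sset_def by auto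

lemma degen_std_1_const:
  assumes "\<alpha> \<in> degen_std N 1"
  shows "\<alpha> 0 = \<alpha> 1"
proof -
  obtain y \<beta> where "\<beta> \<in> ops 1 0" "\<alpha> = cmp 1 y \<beta>"
    using degen_std_1_factor[OF assms] by blast
  moreover have "\<beta> 0 = 0" "\<beta> 1 = 0"
    using ops_le[OF \<open>\<beta> \<in> ops 1 0\<close>, of 0] ops_le[OF \<open>\<beta> \<in> ops 1 0\<close>, of 1] by auto
  ultimately show ?thesis by (simp add: cmp_def)
qed

lemma Ce_simps [simp]: "Simp (Ce C) = Simp C" "Op (Ce C) = Op C"
  by (simp_all add: Ce_def)

lemma face_Ce [simp]: "face (Ce C) = face C"
  by (simp add: face_def fun_eq_iff)

lemma cst_Ce [simp]: "cst (Ce C) = cst C"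
  by (simp add: cst_def fun_eq_iff)

lemma thin_CeI: "x \<in> Simp C m \<Longrightarrow> 2 \<le> m \<or> degenerate C m x \<Longrightarrow> x \<in> Thin (Ce C) m"
  by (auto simp: Ce_def)

lemma Delta_k_thin_low_dim:
  assumes "0 < k" "k < N" "\<alpha> \<in> Thin (Delta_k k N) m" "m \<le> 1"
  shows "\<alpha> \<in> degen_std N m"
proof -
  have "{0..m} \<subseteq> {0, 1}"
    using assms(4) by auto
  then have image: "\<alpha> ` {0..m} \<subseteq> {\<alpha> 0, \<alpha> 1}"
    using image_mono[of "{0..m}" "{0, 1}" \<alpha>] by simp
  have "\<not> {k - 1, k, k + 1} \<inter> {0..N} \<subseteq> \<alpha> ` {0..m}"
  proof
    assume "{k - 1, k, k + 1} \<inter> {0..N} \<subseteq> \<alpha> ` {0..m}"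
    then have "k - 1 \<in> {\<alpha> 0, \<alpha> 1}" "k \<in> {\<alpha> 0, \<alpha> 1}" "k + 1 \<in> {\<alpha> 0, \<alpha> 1}"
      using image assms(1,2) by auto
    then show False
      using assms(1) by auto
  qed
  then show ?thesis
    using assms(3) by (auto simp: Delta_k_def)
qed

lemma cylinder_map_simp:
  assumes "smap (sprod (Delta_min N) (Delta_t 1)) (Ce C) H" "\<alpha> \<in> ops m N" "\<gamma> \<in> ops m 1"
  shows "H m (\<alpha>, \<gamma>) \<in> Simp C m"
  using assms unfolding smap_def sprod_def Delta_min_def Delta_t_def by auto

lemma cylinder_map_op:
  assumes "smap (sprod (Delta_min N) (Delta_t 1)) (Ce C) H"
    and "\<beta> \<in> ops m K" "\<alpha> \<in> ops K N" "\<gamma> \<in> ops K 1"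
  shows "H m (cmp m \<alpha> \<beta>, cmp m \<gamma> \<beta>) = Op C m K \<beta> (H K (\<alpha>, \<gamma>))"
proof -
  have "\<forall>m K \<beta> p. \<beta> \<in> ops m K \<longrightarrow> p \<in> ops K N \<times> ops K 1 \<longrightarrow>
      H m (cmp m (fst p) \<beta>, cmp m (snd p) \<beta>) = Op C m K \<beta> (H K p)"
    using assms(1) unfolding smap_def sprod_def Delta_min_def Delta_t_def by simp
  then show ?thesis
    using assms(2-4) by force
qed

text \<open>\<open>T x y z\<close> says that some 2-simplex has faces \<open>d\<^sub>0 = x\<close>, \<open>d\<^sub>1 = y\<close>, \<open>d\<^sub>2 = z\<close> in a quasi-category
  with a single object whose identity is \<open>u\<close>, so \<open>y\<close> is a composite of \<open>z\<close> followed by \<open>x\<close>. The axioms are the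
  degeneracies and the inner horn fillers of dimensions 2 and 3, where \<open>e\<^sub>i\<^sub>j\<close> is the edge from
  vertex \<open>i\<close> to vertex \<open>j\<close>.\<close>
locale loop_triangles =
  fixes S :: "'a set" and T :: "'a \<Rightarrow> 'a \<Rightarrow> 'a \<Rightarrow> bool" and u :: 'a
  assumes unit_in: "u \<in> S"
    and degen0: "x \<in> S \<Longrightarrow> T x x u"
    and degen1: "x \<in> S \<Longrightarrow> T u x x"
    and fill2: "x \<in> S \<Longrightarrow> z \<in> S \<Longrightarrow> \<exists>y\<in>S. T x y z"
    and fill3_2: "e01 \<in> S \<Longrightarrow> e02 \<in> S \<Longrightarrow> e03 \<in> S \<Longrightarrow> e12 \<in> S \<Longrightarrow> e13 \<in> S \<Longrightarrow> e23 \<in> S \<Longrightarrow>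
       T e12 e02 e01 \<Longrightarrow> T e23 e13 e12 \<Longrightarrow> T e23 e03 e02 \<Longrightarrow> T e13 e03 e01"
    and fill3_1: "e01 \<in> S \<Longrightarrow> e02 \<in> S \<Longrightarrow> e03 \<in> S \<Longrightarrow> e12 \<in> S \<Longrightarrow> e13 \<in> S \<Longrightarrow> e23 \<in> S \<Longrightarrow>
       T e12 e02 e01 \<Longrightarrow> T e23 e13 e12 \<Longrightarrow> T e13 e03 e01 \<Longrightarrow> T e23 e03 e02"
begin

lemma composite_unique:
  "x \<in> S \<Longrightarrow> y \<in> S \<Longrightarrow> y' \<in> S \<Longrightarrow> z \<in> S \<Longrightarrow> T x y z \<Longrightarrow> T x y' z \<Longrightarrow> T y y' u"
  using fill3_2[of u z y' z y x] degen0 unit_in by blast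

lemma homotopic_sym: "f \<in> S \<Longrightarrow> g \<in> S \<Longrightarrow> T f g u \<Longrightarrow> T g f u"
  using composite_unique[of f g f u] degen0 unit_in by blast

lemma homotopic_trans: "f \<in> S \<Longrightarrow> g \<in> S \<Longrightarrow> h \<in> S \<Longrightarrow> T f g u \<Longrightarrow> T g h u \<Longrightarrow> T f h u"
  using fill3_1[of u u h u g f] degen0 unit_in by blast

lemma triangle_homotopic_mid:
  "x \<in> S \<Longrightarrow> y \<in> S \<Longrightarrow> y' \<in> S \<Longrightarrow> z \<in> S \<Longrightarrow> T x y z \<Longrightarrow> T y y' u \<Longrightarrow> T x y' z"
  using fill3_1[of u z y' z y x] degen0 unit_in by blast

lemma triangle_homotopic_left:
  "x \<in> S \<Longrightarrow> x' \<in> S \<Longrightarrow> y \<in> S \<Longrightarrow> z \<in> S \<Longrightarrow> T x y z \<Longrightarrow> T x x' u \<Longrightarrow> T x' y z"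
  using fill3_1[of z z y u x x'] degen1 unit_in homotopic_sym by blast

lemma triangle_homotopic_right:
  assumes "x \<in> S" "y \<in> S" "z \<in> S" "z' \<in> S" "T x y z" "T z z' u"
  shows "T x y z'"
proof -
  obtain w where w: "w \<in> S" "T x w z'"
    using fill2 assms by blast
  have "T w y u"
    using fill3_2[of u z y z' w x] assms w unit_in homotopic_sym by blast
  then show ?thesis
    using triangle_homotopic_mid assms w by blast
qed

lemma composite_assoc:
  "x \<in> S \<Longrightarrow> y \<in> S \<Longrightarrow> z \<in> S \<Longrightarrow> p \<in> S \<Longrightarrow> q \<in> S \<Longrightarrow> r \<in> S \<Longrightarrow>
   T y p z \<Longrightarrow> T x q p \<Longrightarrow> T x r y \<Longrightarrow> T r q z"
  using fill3_2[of z p q y r x] by blast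

lemma unit_triangle_iff: "f \<in> S \<Longrightarrow> g \<in> S \<Longrightarrow> T u f g \<longleftrightarrow> T g f u"
  using composite_unique[of u g f g] triangle_homotopic_mid[of u g f g] degen1 unit_in by blast

end

locale pointed_sset =
  fixes C :: "'a sset" and c :: 'a
  assumes simplicial: "simplicial_set C" and base: "c \<in> Simp C 0"
begin

lemma op_closed: "\<alpha> \<in> ops m N \<Longrightarrow> x \<in> Simp C N \<Longrightarrow> Op C m N \<alpha> x \<in> Simp C m"
  using simplicial by (simp add: simplicial_set_def)

lemma op_idop: "x \<in> Simp C N \<Longrightarrow> Op C N N (idop N) x = x"
  using simplicial by (simp add: simplicial_set_def)

lemma op_op: "\<alpha> \<in> ops m N \<Longrightarrow> \<beta> \<in> ops k m \<Longrightarrow> x \<in> Simp C N \<Longrightarrow>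
   Op C k m \<beta> (Op C m N \<alpha> x) = Op C k N (cmp k \<alpha> \<beta>) x"
  using simplicial unfolding simplicial_set_def by blast

lemma cst_simp: "cst C m c \<in> Simp C m"
  unfolding cst_def by (rule op_closed[OF const_zero_ops base])

lemma op_cst: "\<alpha> \<in> ops m M \<Longrightarrow> Op C m M \<alpha> (cst C M c) = cst C m c"
  unfolding cst_def by (simp add: op_op[OF const_zero_ops _ base] cmp_const_zero)

lemma face_cst: "face C N j (cst C (Suc N) c) = cst C N c"
  unfolding face_def by (rule op_cst[OF delta_face_ops])

lemma face_simp: "x \<in> Simp C (Suc N) \<Longrightarrow> face C N j x \<in> Simp C N"
  unfolding face_def by (rule op_closed[OF delta_face_ops])

lemma face_face:
  assumes x: "x \<in> Simp C (Suc (Suc N))" and "i < j"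
  shows "face C N i (face C (Suc N) j x) = face C N (j - 1) (face C (Suc N) i x)"
  unfolding face_def op_op[OF delta_face_ops delta_face_ops x] delta_face_comm[OF \<open>i < j\<close>] ..

lemma op_missing_cst_face:
  assumes \<alpha>: "\<alpha> \<in> ops m (Suc N)" and v: "v \<le> Suc N" "\<forall>i\<le>m. \<alpha> i \<noteq> v"
    and x: "x \<in> Simp C (Suc N)" and "face C N v x = cst C N c"
  shows "Op C m (Suc N) \<alpha> x = cst C m c"
proof -
  obtain \<beta> where \<beta>: "\<beta> \<in> ops m N" "cmp m (delta_face N v) \<beta> = \<alpha>"
    using ops_factor_delta_face[OF \<alpha> v] .
  have "Op C m (Suc N) \<alpha> x = Op C m N \<beta> (face C N v x)"
    unfolding face_def op_op[OF delta_face_ops \<beta>(1) x] \<beta>(2) ..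
  also have "\<dots> = cst C m c"
    using \<open>face C N v x = cst C N c\<close> op_cst[OF \<beta>(1)] by simp
  finally show ?thesis .
qed

lemma cst_edge_degenerate: "degenerate C 1 (cst C 1 c)"
  unfolding degenerate_def cst_def using const_zero_ops base by blast

lemma op_degen_std_1_degenerate:
  assumes "\<alpha> \<in> degen_std N 1" "x \<in> Simp C N"
  shows "degenerate C 1 (Op C 1 N \<alpha> x)"
proof -
  obtain y \<beta> where y: "y \<in> ops 0 N" "\<beta> \<in> ops 1 0" "\<alpha> = cmp 1 y \<beta>"
    using degen_std_1_factor[OF assms(1)] by blast
  then have "Op C 1 N \<alpha> x = Op C 1 0 \<beta> (Op C 0 N y x)"
    using op_op[OF y(1,2) assms(2)] by simp
  then show ?thesis
    unfolding degenerate_def using y(2) op_closed[OF y(1) assms(2)] by blast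
qed

definition cst_faces_outside :: "nat \<Rightarrow> nat set \<Rightarrow> 'a \<Rightarrow> bool" where
  "cst_faces_outside N J y \<longleftrightarrow> (\<forall>j \<le> Suc N. j \<notin> J \<longrightarrow> face C N j y = cst C N c)"

abbreviation all_faces_cst :: "nat \<Rightarrow> 'a \<Rightarrow> bool" where
  "all_faces_cst N y \<equiv> cst_faces_outside N {} y"

lemma cst_faces_outside_cst: "cst_faces_outside N J (cst C (Suc N) c)"
  unfolding cst_faces_outside_def by (simp add: face_cst)

lemma cst_faces_outside_mono: "J \<subseteq> J' \<Longrightarrow> cst_faces_outside N J y \<Longrightarrow> cst_faces_outside N J' y"
  unfolding cst_faces_outside_def by blast

lemma cst_faces_outside_remove:
  "j \<le> Suc N \<Longrightarrow>
   cst_faces_outside N (J - {j}) y \<longleftrightarrow> face C N j y = cst C N c \<and> cst_faces_outside N J y"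
  unfolding cst_faces_outside_def by auto

lemma all_faces_cst_boundary:
  assumes x: "x \<in> Simp C (Suc N)" "all_faces_cst N x" and \<alpha>: "\<alpha> \<in> boundary (Suc N) m"
  shows "Op C m (Suc N) \<alpha> x = cst C m c"
proof -
  obtain v where "v \<le> Suc N" "\<forall>i\<le>m. \<alpha> i \<noteq> v" "\<alpha> \<in> ops m (Suc N)"
    using \<alpha> unfolding boundary_iff by blast
  then show ?thesis
    using op_missing_cst_face x unfolding cst_faces_outside_def by blast
qed

lemma face_of_all_faces_cst:
  assumes \<Theta>: "\<Theta> \<in> Simp C (Suc (Suc N))" and h: "h \<le> Suc (Suc N)"
    and others: "\<forall>i \<le> Suc (Suc N). i \<noteq> h \<longrightarrow> all_faces_cst N (face C (Suc N) i \<Theta>)"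
  shows "all_faces_cst N (face C (Suc N) h \<Theta>)"
  unfolding cst_faces_outside_def
proof (intro allI impI)
  fix j assume j: "j \<le> Suc N"
  show "face C N j (face C (Suc N) h \<Theta>) = cst C N c"
  proof (cases "j < h")
    case True
    then have "face C N j (face C (Suc N) h \<Theta>) = face C N (h - 1) (face C (Suc N) j \<Theta>)"
      by (rule face_face[OF \<Theta>])
    also have "\<dots> = cst C N c"
      using others j h True unfolding cst_faces_outside_def by auto
    finally show ?thesis .
  next
    case False
    then have "face C N j (face C (Suc N) h \<Theta>) = face C N h (face C (Suc N) (Suc j) \<Theta>)"
      using face_face[OF \<Theta>, of h "Suc j"] by simp
    also have "\<dots> = cst C N c"
      using others j h False unfolding cst_faces_outside_def by auto
    finally show ?thesis .
  qed
qed

lemma face_cst_faces_outside: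
  assumes \<Theta>: "\<Theta> \<in> Simp C (Suc (Suc N))" and out: "cst_faces_outside (Suc N) {k..k + r} \<Theta>"
    and h: "h \<in> {k..k + r}"
  shows "cst_faces_outside N {k..<k + r} (face C (Suc N) h \<Theta>)"
  unfolding cst_faces_outside_def
proof (intro allI impI)
  fix j assume j: "j \<le> Suc N" "j \<notin> {k..<k + r}"
  show "face C N j (face C (Suc N) h \<Theta>) = cst C N c"
  proof (cases "j < k")
    case True
    then have "face C N j (face C (Suc N) h \<Theta>) = face C N (h - 1) (face C (Suc N) j \<Theta>)"
      using h by (intro face_face[OF \<Theta>]) simp
    also have "\<dots> = cst C N c"
      using out True j unfolding cst_faces_outside_def by (simp add: face_cst)
    finally show ?thesis .
  next
    case False
    then have "face C N j (face C (Suc N) h \<Theta>) = face C N h (face C (Suc N) (Suc j) \<Theta>)"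
      using face_face[OF \<Theta>, of h "Suc j"] j h by simp
    also have "\<dots> = cst C N c"
      using out False j unfolding cst_faces_outside_def by (simp add: face_cst)
    finally show ?thesis .
  qed
qed

lemma degeneracy_of_all_faces_cst:
  assumes k: "k \<le> Suc M" and x: "x \<in> Simp C (Suc M)" "all_faces_cst M x"
  obtains s where "s \<in> Simp C (Suc (Suc M))" "face C (Suc M) k s = x" "face C (Suc M) (Suc k) s = x"
    "cst_faces_outside (Suc M) {k, Suc k} s"
proof
  define s where "s = Op C (Suc (Suc M)) (Suc M) (codegeneracy (Suc M) k) x"
  have faces: "face C (Suc M) j s = Op C (Suc M) (Suc M) (cmp (Suc M) (codegeneracy (Suc M) k) (delta_face (Suc M) j)) x" for j
    unfolding s_def face_def by (rule op_op[OF codegeneracy_ops[OF k] delta_face_ops x(1)])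
  show "s \<in> Simp C (Suc (Suc M))"
    unfolding s_def by (rule op_closed[OF codegeneracy_ops[OF k] x(1)])
  show "face C (Suc M) k s = x" "face C (Suc M) (Suc k) s = x"
    unfolding faces by (simp_all add: codegeneracy_delta_face op_idop[OF x(1)])
  show "cst_faces_outside (Suc M) {k, Suc k} s"
    unfolding cst_faces_outside_def faces
    using all_faces_cst_boundary[OF x codegeneracy_delta_face_boundary[OF k]] by simp
qed

end

locale pointed_qcat = pointed_sset +
  assumes quasi: "quasi_category C"
begin

lemma inner_horn_filler:
  assumes h: "0 < h" "h < Suc (Suc M)"
    and x: "\<forall>i \<le> Suc (Suc M). i \<noteq> h \<longrightarrow> x i \<in> Simp C (Suc M)"
    and compat: "\<forall>i j. i < j \<longrightarrow> j \<le> Suc (Suc M) \<longrightarrow> i \<noteq> h \<longrightarrow> j \<noteq> h \<longrightarrow>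
       face C M i (x j) = face C M (j - 1) (x i)"
  obtains y where "y \<in> Simp C (Suc (Suc M))" "\<forall>i \<le> Suc (Suc M). i \<noteq> h \<longrightarrow> face C (Suc M) i y = x i"
proof -
  have "\<exists>y \<in> Simp C (Suc (Suc M)). \<forall>i \<le> Suc (Suc M). i \<noteq> h \<longrightarrow> face C (Suc (Suc M) - 1) i y = x i"
    by (rule quasi[unfolded quasi_category_def, THEN conjunct2, rule_format])
      (use h x compat in \<open>simp_all add: numeral_2_eq_2\<close>)
  then show thesis
    using that by auto
qed

lemma window_horn_compatible:
  assumes out: "\<forall>i \<le> Suc (Suc M). i \<noteq> h \<longrightarrow> i \<notin> {k..k + r} \<longrightarrow> x i = cst C (Suc M) c"
    and win: "\<forall>i \<le> Suc (Suc M). i \<noteq> h \<longrightarrow> i \<in> {k..k + r} \<longrightarrow> cst_faces_outside M {k..<k + r} (x i)"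
    and compat: "\<forall>i j. i < j \<longrightarrow> j \<le> Suc (Suc M) \<longrightarrow> i \<noteq> h \<longrightarrow> j \<noteq> h \<longrightarrow> k \<le> i \<longrightarrow> j \<le> k + r \<longrightarrow>
       face C M i (x j) = face C M (j - 1) (x i)"
    and ij: "i < j" "j \<le> Suc (Suc M)" "i \<noteq> h" "j \<noteq> h"
  shows "face C M i (x j) = face C M (j - 1) (x i)"
proof (cases "i < k")
  case True
  have "face C M i (x j) = cst C M c"
    using out win ij True face_cst unfolding cst_faces_outside_def
    by (cases "j \<le> k + r") auto
  moreover have "x i = cst C (Suc M) c"
    using out ij True by auto
  ultimately show ?thesis
    by (simp add: face_cst)
next
  case False
  show ?thesis
  proof (cases "j \<le> k + r")
    case True
    with compat ij False show ?thesis by simp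
  next
    case j_out: False
    have "j - 1 \<le> Suc M" "j - 1 \<notin> {k..<k + r}"
      using ij j_out by auto
    then have "face C M (j - 1) (x i) = cst C M c"
      using out win ij False face_cst unfolding cst_faces_outside_def
      by (cases "i \<le> k + r") auto
    moreover have "x j = cst C (Suc M) c"
      using out ij j_out by auto
    ultimately show ?thesis
      by (simp add: face_cst)
  qed
qed

lemma window_horn_filler:
  assumes h: "0 < h" "h < Suc (Suc M)" "h \<in> {k..k + r}"
    and x: "\<forall>i \<le> Suc (Suc M). i \<noteq> h \<longrightarrow> x i \<in> Simp C (Suc M)"
    and out: "\<forall>i \<le> Suc (Suc M). i \<noteq> h \<longrightarrow> i \<notin> {k..k + r} \<longrightarrow> x i = cst C (Suc M) c"
    and win: "\<forall>i \<le> Suc (Suc M). i \<noteq> h \<longrightarrow> i \<in> {k..k + r} \<longrightarrow> cst_faces_outside M {k..<k + r} (x i)"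
    and compat: "\<forall>i j. i < j \<longrightarrow> j \<le> Suc (Suc M) \<longrightarrow> i \<noteq> h \<longrightarrow> j \<noteq> h \<longrightarrow> k \<le> i \<longrightarrow> j \<le> k + r \<longrightarrow>
       face C M i (x j) = face C M (j - 1) (x i)"
  obtains y where "y \<in> Simp C (Suc (Suc M))" "\<forall>i \<le> Suc (Suc M). i \<noteq> h \<longrightarrow> face C (Suc M) i y = x i"
    "cst_faces_outside M {k..<k + r} (face C (Suc M) h y)"
proof -
  obtain y where y: "y \<in> Simp C (Suc (Suc M))" "\<forall>i \<le> Suc (Suc M). i \<noteq> h \<longrightarrow> face C (Suc M) i y = x i"
    using inner_horn_filler[OF h(1,2) x] window_horn_compatible[OF out win compat] by blast
  moreover have "cst_faces_outside (Suc M) {k..k + r} y"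
    using y(2) out h(3) unfolding cst_faces_outside_def by auto
  ultimately show thesis
    using that face_cst_faces_outside h(3) by blast
qed

end

locale qcat_sphere = pointed_qcat +
  fixes n :: nat
  assumes two_le_n: "2 \<le> n"
begin

lemma Suc_pred_n: "Suc (n - 1) = n" "Suc (n - Suc 0) = n"
  using two_le_n by simp_all

definition spheres :: "'a set" where
  "spheres = {y \<in> Simp C n. all_faces_cst (n - 1) y}"

definition triangle :: "nat \<Rightarrow> 'a \<Rightarrow> 'a \<Rightarrow> 'a \<Rightarrow> bool" where
  "triangle k x y z \<longleftrightarrow> (\<exists>\<theta> \<in> Simp C (Suc n). face C n k \<theta> = x \<and> face C n (Suc k) \<theta> = y \<and>
      face C n (Suc (Suc k)) \<theta> = z \<and> cst_faces_outside n {k..<k + 3} \<theta>)"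

lemma cst_sphere: "cst C n c \<in> spheres"
  using cst_simp cst_faces_outside_cst[of "n - 1"] Suc_pred_n unfolding spheres_def by simp

lemma sphere_simp: "x \<in> spheres \<Longrightarrow> x \<in> Simp C n"
  unfolding spheres_def by simp

lemma sphere_iff: "x \<in> spheres \<longleftrightarrow> x \<in> Simp C (Suc (n - 1)) \<and> all_faces_cst (n - 1) x"
  unfolding spheres_def Suc_pred_n by simp

lemma sphere_boundary: "x \<in> spheres \<Longrightarrow> \<alpha> \<in> boundary n m \<Longrightarrow> Op C m n \<alpha> x = cst C m c"
  using all_faces_cst_boundary[of x "n - 1" \<alpha> m] unfolding sphere_iff Suc_pred_n by blast

lemma triangle_degen0:
  assumes "k \<le> n - 1" "x \<in> spheres"
  shows "triangle k x x (cst C n c)"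
proof -
  obtain s where s: "s \<in> Simp C (Suc n)" "face C n k s = x" "face C n (Suc k) s = x"
      "cst_faces_outside n {k, Suc k} s"
    by (rule degeneracy_of_all_faces_cst[of k "n - 1" x, unfolded Suc_pred_n])
      (use assms two_le_n in \<open>auto simp: sphere_iff Suc_pred_n\<close>)
  then have "face C n (Suc (Suc k)) s = cst C n c"
    using assms(1) Suc_pred_n unfolding cst_faces_outside_def by auto
  moreover have "cst_faces_outside n {k..<k + 3} s"
    using s(4) by (rule cst_faces_outside_mono[rotated]) auto
  ultimately show ?thesis
    unfolding triangle_def using s by blast
qed

lemma triangle_degen1:
  assumes "k \<le> n - 1" "x \<in> spheres"
  shows "triangle k (cst C n c) x x"
proof -
  obtain s where s: "s \<in> Simp C (Suc n)" "face C n (Suc k) s = x" "face C n (Suc (Suc k)) s = x"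
      "cst_faces_outside n {Suc k, Suc (Suc k)} s"
    by (rule degeneracy_of_all_faces_cst[of "Suc k" "n - 1" x, unfolded Suc_pred_n])
      (use assms two_le_n in \<open>auto simp: sphere_iff Suc_pred_n\<close>)
  then have "face C n k s = cst C n c"
    using assms(1) unfolding cst_faces_outside_def by auto
  moreover have "cst_faces_outside n {k..<k + 3} s"
    using s(4) by (rule cst_faces_outside_mono[rotated]) auto
  ultimately show ?thesis
    unfolding triangle_def using s by blast
qed

lemma triangle_middle_sphere:
  assumes k: "k \<le> n - 1" and x: "x \<in> spheres" and z: "z \<in> spheres" and t: "triangle k x y z"
  shows "y \<in> spheres"
proof -
  obtain \<theta> where \<theta>: "\<theta> \<in> Simp C (Suc n)" "face C n k \<theta> = x" "face C n (Suc k) \<theta> = y"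
      "face C n (Suc (Suc k)) \<theta> = z" "cst_faces_outside n {k..<k + 3} \<theta>"
    using t unfolding triangle_def by blast
  have \<theta>': "\<theta> \<in> Simp C (Suc (Suc (n - 1)))"
    using \<theta>(1) by (simp add: Suc_pred_n)
  have "all_faces_cst (n - 1) (face C (Suc (n - 1)) i \<theta>)" if "i \<le> Suc n" "i \<noteq> Suc k" for i
  proof -
    have "face C n i \<theta> \<in> {x, z, cst C n c}"
      using \<theta> that unfolding cst_faces_outside_def by (cases "i = k \<or> i = Suc (Suc k)") auto
    then show ?thesis
      using x z cst_sphere by (auto simp: sphere_iff Suc_pred_n)
  qed
  then have "all_faces_cst (n - 1) (face C (Suc (n - 1)) (Suc k) \<theta>)"
    using face_of_all_faces_cst[OF \<theta>', of "Suc k"] k by (simp add: Suc_pred_n)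
  then show ?thesis
    using face_simp[OF \<theta>(1), of "Suc k"] \<theta>(3) by (simp add: sphere_iff Suc_pred_n)
qed

lemma triangle_fill2:
  assumes k: "k \<le> n - 1" and x: "x \<in> spheres" and z: "z \<in> spheres"
  shows "\<exists>y \<in> spheres. triangle k x y z"
proof -
  define xs where "xs i = (if i = k then x else if i = Suc (Suc k) then z else cst C n c)" for i
  have xs: "xs i \<in> spheres" for i
    using x z cst_sphere unfolding xs_def by simp
  obtain \<theta> where \<theta>: "\<theta> \<in> Simp C (Suc (Suc (n - 1)))"
      "\<forall>i \<le> Suc (Suc (n - 1)). i \<noteq> Suc k \<longrightarrow> face C (Suc (n - 1)) i \<theta> = xs i"
  proof (rule window_horn_filler[where k = k and r = 2])
    show "0 < Suc k" "Suc k < Suc (Suc (n - 1))" "Suc k \<in> {k..k + 2}"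
      using k two_le_n by auto
    show "\<forall>i \<le> Suc (Suc (n - 1)). i \<noteq> Suc k \<longrightarrow> xs i \<in> Simp C (Suc (n - 1))"
      "\<forall>i \<le> Suc (Suc (n - 1)). i \<noteq> Suc k \<longrightarrow> i \<in> {k..k + 2} \<longrightarrow> cst_faces_outside (n - 1) {k..<k + 2} (xs i)"
      using xs by (auto simp: sphere_iff cst_faces_outside_def)
    show "\<forall>i \<le> Suc (Suc (n - 1)). i \<noteq> Suc k \<longrightarrow> i \<notin> {k..k + 2} \<longrightarrow> xs i = cst C (Suc (n - 1)) c"
      by (auto simp: xs_def Suc_pred_n)
    show "\<forall>i j. i < j \<longrightarrow> j \<le> Suc (Suc (n - 1)) \<longrightarrow> i \<noteq> Suc k \<longrightarrow> j \<noteq> Suc k \<longrightarrow> k \<le> i \<longrightarrow> j \<le> k + 2 \<longrightarrow>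
        face C (n - 1) i (xs j) = face C (n - 1) (j - 1) (xs i)"
    proof (intro allI impI)
      fix i j assume "i < j" "j \<le> Suc (Suc (n - 1))" "i \<noteq> Suc k" "j \<noteq> Suc k" "k \<le> i" "j \<le> k + 2"
      then have "i = k" "j = Suc (Suc k)" by auto
      then show "face C (n - 1) i (xs j) = face C (n - 1) (j - 1) (xs i)"
        using x z \<open>j \<le> Suc (Suc (n - 1))\<close> unfolding xs_def by (auto simp: sphere_iff cst_faces_outside_def)
    qed
  qed
  then have \<theta>n: "\<theta> \<in> Simp C (Suc n)" "\<forall>i \<le> Suc n. i \<noteq> Suc k \<longrightarrow> face C n i \<theta> = xs i"
    by (simp_all add: Suc_pred_n)
  have "face C n k \<theta> = x" "face C n (Suc (Suc k)) \<theta> = z"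
    using \<theta>n(2)[rule_format, of k] \<theta>n(2)[rule_format, of "Suc (Suc k)"] k two_le_n
    unfolding xs_def by auto
  moreover have "cst_faces_outside n {k..<k + 3} \<theta>"
    using \<theta>n(2) unfolding cst_faces_outside_def xs_def by auto
  ultimately have "triangle k x (face C n (Suc k) \<theta>) z"
    unfolding triangle_def using \<theta>n(1) by blast
  then show ?thesis
    using triangle_middle_sphere[OF k x z] by blast
qed

lemma triangle_horn3_filler:
  assumes k: "k \<le> n - 1" and h: "h = 1 \<or> h = 2"
    and t: "\<forall>i \<le> 3. i \<noteq> h \<longrightarrow> t i \<in> Simp C (Suc n) \<and> cst_faces_outside n {k..<k + 3} (t i)"
    and compat: "\<forall>i j. i < j \<longrightarrow> j \<le> 3 \<longrightarrow> i \<noteq> h \<longrightarrow> j \<noteq> h \<longrightarrow>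
       face C n (k + i) (t j) = face C n (k + j - 1) (t i)"
  obtains \<Theta> where "\<Theta> \<in> Simp C (Suc (Suc n))" "\<forall>i \<le> 3. i \<noteq> h \<longrightarrow> face C (Suc n) (k + i) \<Theta> = t i"
    "cst_faces_outside n {k..<k + 3} (face C (Suc n) (k + h) \<Theta>)"
proof -
  define x where "x i = (if i \<in> {k..k + 3} then t (i - k) else cst C (Suc n) c)" for i
  have kh: "0 < k + h" "k + h < Suc (Suc n)" "k + h \<in> {k..k + 3}"
    using h k two_le_n by auto
  obtain \<Theta> where \<Theta>: "\<Theta> \<in> Simp C (Suc (Suc n))"
      "\<forall>i \<le> Suc (Suc n). i \<noteq> k + h \<longrightarrow> face C (Suc n) i \<Theta> = x i"
      "cst_faces_outside n {k..<k + 3} (face C (Suc n) (k + h) \<Theta>)"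
  proof (rule window_horn_filler[OF kh, where x = x])
    show "\<forall>i \<le> Suc (Suc n). i \<noteq> k + h \<longrightarrow> x i \<in> Simp C (Suc n)"
      "\<forall>i \<le> Suc (Suc n). i \<noteq> k + h \<longrightarrow> i \<in> {k..k + 3} \<longrightarrow> cst_faces_outside n {k..<k + 3} (x i)"
      using t cst_simp unfolding x_def by auto
    show "\<forall>i \<le> Suc (Suc n). i \<noteq> k + h \<longrightarrow> i \<notin> {k..k + 3} \<longrightarrow> x i = cst C (Suc n) c"
      unfolding x_def by auto
    show "\<forall>i j. i < j \<longrightarrow> j \<le> Suc (Suc n) \<longrightarrow> i \<noteq> k + h \<longrightarrow> j \<noteq> k + h \<longrightarrow> k \<le> i \<longrightarrow> j \<le> k + 3 \<longrightarrow>
        face C n i (x j) = face C n (j - 1) (x i)"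
    proof (intro allI impI)
      fix i j assume ij: "i < j" "j \<le> Suc (Suc n)" "i \<noteq> k + h" "j \<noteq> k + h" "k \<le> i" "j \<le> k + 3"
      have "i - k < j - k" "j - k \<le> 3" "i - k \<noteq> h" "j - k \<noteq> h"
        using ij by auto
      then have "face C n (k + (i - k)) (t (j - k)) = face C n (k + (j - k) - 1) (t (i - k))"
        using compat by blast
      moreover have "k + (i - k) = i" "k + (j - k) - 1 = j - 1"
        using ij by auto
      ultimately show "face C n i (x j) = face C n (j - 1) (x i)"
        using ij unfolding x_def by auto
    qed
  qed
  moreover have "\<forall>i \<le> 3. i \<noteq> h \<longrightarrow> face C (Suc n) (k + i) \<Theta> = t i"
    using \<Theta>(2) k two_le_n unfolding x_def by auto
  ultimately show thesis
    using that by blast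
qed

lemma triangle_fill3_2:
  assumes k: "k \<le> n - 1"
    and "triangle k e12 e02 e01" "triangle k e23 e13 e12" "triangle k e23 e03 e02"
  shows "triangle k e13 e03 e01"
proof -
  obtain t3 t0 t1 where
      t3: "t3 \<in> Simp C (Suc n)" "face C n k t3 = e12" "face C n (Suc k) t3 = e02"
        "face C n (Suc (Suc k)) t3 = e01" "cst_faces_outside n {k..<k + 3} t3" and
      t0: "t0 \<in> Simp C (Suc n)" "face C n k t0 = e23" "face C n (Suc k) t0 = e13"
        "face C n (Suc (Suc k)) t0 = e12" "cst_faces_outside n {k..<k + 3} t0" and
      t1: "t1 \<in> Simp C (Suc n)" "face C n k t1 = e23" "face C n (Suc k) t1 = e03"
        "face C n (Suc (Suc k)) t1 = e02" "cst_faces_outside n {k..<k + 3} t1"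
    using assms(2-4) unfolding triangle_def by metis
  define t where "t i = (if i = 0 then t0 else if i = 1 then t1 else t3)" for i :: nat
  obtain \<Theta> where \<Theta>: "\<Theta> \<in> Simp C (Suc (Suc n))" "\<forall>i \<le> 3. i \<noteq> 2 \<longrightarrow> face C (Suc n) (k + i) \<Theta> = t i"
      "cst_faces_outside n {k..<k + 3} (face C (Suc n) (k + 2) \<Theta>)"
  proof (rule triangle_horn3_filler[OF k, of 2 t])
    show "\<forall>i \<le> 3. i \<noteq> 2 \<longrightarrow> t i \<in> Simp C (Suc n) \<and> cst_faces_outside n {k..<k + 3} (t i)"
      using t0 t1 t3 unfolding t_def by auto
    show "\<forall>i j. i < j \<longrightarrow> j \<le> 3 \<longrightarrow> i \<noteq> 2 \<longrightarrow> j \<noteq> 2 \<longrightarrow>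
        face C n (k + i) (t j) = face C n (k + j - 1) (t i)"
    proof (intro allI impI)
      fix i j :: nat assume "i < j" "j \<le> 3" "i \<noteq> 2" "j \<noteq> 2"
      then have "(i = 0 \<and> j = 1) \<or> (i = 0 \<and> j = 3) \<or> (i = 1 \<and> j = 3)" by auto
      then show "face C n (k + i) (t j) = face C n (k + j - 1) (t i)"
        using t0 t1 t3 unfolding t_def by (auto simp: numeral_3_eq_3)
    qed
  qed simp
  have faces: "face C (Suc n) k \<Theta> = t0" "face C (Suc n) (Suc k) \<Theta> = t1" "face C (Suc n) (k + 3) \<Theta> = t3"
    using \<Theta>(2)[rule_format, of 0] \<Theta>(2)[rule_format, of 1] \<Theta>(2)[rule_format, of 3]
    unfolding t_def by simp_all
  let ?y = "face C (Suc n) (Suc (Suc k)) \<Theta>"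
  have "face C n k ?y = e13"
    using face_face[OF \<Theta>(1), of k "Suc (Suc k)"] faces t0 by simp
  moreover have "face C n (Suc k) ?y = e03"
    using face_face[OF \<Theta>(1), of "Suc k" "Suc (Suc k)"] faces t1 by simp
  moreover have "face C n (Suc (Suc k)) ?y = e01"
    using face_face[OF \<Theta>(1), of "Suc (Suc k)" "k + 3"] faces t3 by (simp add: numeral_3_eq_3)
  ultimately show ?thesis
    unfolding triangle_def using face_simp[OF \<Theta>(1)] \<Theta>(3) by (auto simp: numeral_2_eq_2)
qed

lemma triangle_fill3_1:
  assumes k: "k \<le> n - 1"
    and "triangle k e12 e02 e01" "triangle k e23 e13 e12" "triangle k e13 e03 e01"
  shows "triangle k e23 e03 e02"
proof -
  obtain t3 t0 t2 where
      t3: "t3 \<in> Simp C (Suc n)" "face C n k t3 = e12" "face C n (Suc k) t3 = e02"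
        "face C n (Suc (Suc k)) t3 = e01" "cst_faces_outside n {k..<k + 3} t3" and
      t0: "t0 \<in> Simp C (Suc n)" "face C n k t0 = e23" "face C n (Suc k) t0 = e13"
        "face C n (Suc (Suc k)) t0 = e12" "cst_faces_outside n {k..<k + 3} t0" and
      t2: "t2 \<in> Simp C (Suc n)" "face C n k t2 = e13" "face C n (Suc k) t2 = e03"
        "face C n (Suc (Suc k)) t2 = e01" "cst_faces_outside n {k..<k + 3} t2"
    using assms(2-4) unfolding triangle_def by metis
  define t where "t i = (if i = 0 then t0 else if i = 2 then t2 else t3)" for i :: nat
  obtain \<Theta> where \<Theta>: "\<Theta> \<in> Simp C (Suc (Suc n))" "\<forall>i \<le> 3. i \<noteq> 1 \<longrightarrow> face C (Suc n) (k + i) \<Theta> = t i"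
      "cst_faces_outside n {k..<k + 3} (face C (Suc n) (k + 1) \<Theta>)"
  proof (rule triangle_horn3_filler[OF k, of 1 t])
    show "\<forall>i \<le> 3. i \<noteq> 1 \<longrightarrow> t i \<in> Simp C (Suc n) \<and> cst_faces_outside n {k..<k + 3} (t i)"
      using t0 t2 t3 unfolding t_def by auto
    show "\<forall>i j. i < j \<longrightarrow> j \<le> 3 \<longrightarrow> i \<noteq> 1 \<longrightarrow> j \<noteq> 1 \<longrightarrow>
        face C n (k + i) (t j) = face C n (k + j - 1) (t i)"
    proof (intro allI impI)
      fix i j :: nat assume "i < j" "j \<le> 3" "i \<noteq> 1" "j \<noteq> 1"
      then have "(i = 0 \<and> j = 2) \<or> (i = 0 \<and> j = 3) \<or> (i = 2 \<and> j = 3)" by auto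
      then show "face C n (k + i) (t j) = face C n (k + j - 1) (t i)"
        using t0 t2 t3 unfolding t_def by (auto simp: numeral_3_eq_3)
    qed
  qed simp
  have faces: "face C (Suc n) k \<Theta> = t0" "face C (Suc n) (Suc (Suc k)) \<Theta> = t2" "face C (Suc n) (k + 3) \<Theta> = t3"
    using \<Theta>(2)[rule_format, of 0] \<Theta>(2)[rule_format, of 2] \<Theta>(2)[rule_format, of 3]
    unfolding t_def by (simp_all add: numeral_2_eq_2)
  let ?y = "face C (Suc n) (Suc k) \<Theta>"
  have "face C n k ?y = e23"
    using face_face[OF \<Theta>(1), of k "Suc k"] faces t0 by simp
  moreover have "face C n (Suc k) ?y = e03"
    using face_face[OF \<Theta>(1), of "Suc k" "Suc (Suc k)"] faces t2 by simp
  moreover have "face C n (Suc (Suc k)) ?y = e02"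
    using face_face[OF \<Theta>(1), of "Suc k" "k + 3"] faces t3 by (simp add: numeral_3_eq_3)
  ultimately show ?thesis
    unfolding triangle_def using face_simp[OF \<Theta>(1)] \<Theta>(3) by auto
qed

text \<open>The horn \<open>\<Lambda>\<^sup>n\<^sup>+\<^sup>1\<^sub>n\<^sub>-\<^sub>1\<close> filled here is inner precisely because \<open>n \<ge> 2\<close>.\<close>
lemma triangle_left_inverse:
  assumes x: "x \<in> spheres"
  shows "\<exists>y \<in> spheres. triangle (n - 1) y (cst C n c) x"
proof -
  obtain M where M: "n = Suc M" "0 < M"
    using two_le_n by (metis Suc_pred_n(1) Suc_1 Suc_le_mono gr0I not_one_le_zero)
  define xs where "xs i = (if i = Suc (Suc M) then x else cst C (Suc M) c)" for i
  have x': "x \<in> Simp C (Suc M)" "all_faces_cst M x"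
    using x M(1) unfolding spheres_def by auto
  obtain \<theta> where \<theta>: "\<theta> \<in> Simp C (Suc (Suc M))"
      "\<forall>i \<le> Suc (Suc M). i \<noteq> M \<longrightarrow> face C (Suc M) i \<theta> = xs i"
  proof (rule window_horn_filler[where k = M and r = 2 and h = M and x = xs])
    show "0 < M" "M < Suc (Suc M)" "M \<in> {M..M + 2}"
      using M by auto
    show "\<forall>i \<le> Suc (Suc M). i \<noteq> M \<longrightarrow> xs i \<in> Simp C (Suc M)"
      "\<forall>i \<le> Suc (Suc M). i \<noteq> M \<longrightarrow> i \<in> {M..M + 2} \<longrightarrow> cst_faces_outside M {M..<M + 2} (xs i)"
      using x' cst_simp unfolding xs_def cst_faces_outside_def by (auto simp: face_cst)
    show "\<forall>i \<le> Suc (Suc M). i \<noteq> M \<longrightarrow> i \<notin> {M..M + 2} \<longrightarrow> xs i = cst C (Suc M) c"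
      unfolding xs_def by auto
    show "\<forall>i j. i < j \<longrightarrow> j \<le> Suc (Suc M) \<longrightarrow> i \<noteq> M \<longrightarrow> j \<noteq> M \<longrightarrow> M \<le> i \<longrightarrow> j \<le> M + 2 \<longrightarrow>
        face C M i (xs j) = face C M (j - 1) (xs i)"
      using x' unfolding xs_def cst_faces_outside_def by (auto simp: face_cst)
  qed
  define y where "y = face C (Suc M) M \<theta>"
  have "all_faces_cst M y"
    unfolding y_def using \<theta> x' cst_faces_outside_cst unfolding xs_def
    by (intro face_of_all_faces_cst) auto
  then have "y \<in> spheres"
    unfolding spheres_def y_def using face_simp[OF \<theta>(1)] M(1) by simp
  moreover have "triangle (n - 1) y (cst C n c) x"
    unfolding triangle_def using \<theta> M(1)
    by (intro bexI[of _ \<theta>]) (auto simp: xs_def y_def cst_faces_outside_def)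
  ultimately show ?thesis
    by blast
qed

lemma loop_triangles_triangle:
  assumes "k \<le> n - 1"
  shows "loop_triangles spheres (triangle k) (cst C n c)"
proof
  show "cst C n c \<in> spheres"
    by (rule cst_sphere)
  show "triangle k x x (cst C n c)" "triangle k (cst C n c) x x" if "x \<in> spheres" for x
    using assms that by (rule triangle_degen0, rule triangle_degen1)
  show "\<exists>y\<in>spheres. triangle k x y z" if "x \<in> spheres" "z \<in> spheres" for x z
    using assms that by (rule triangle_fill2)
  show "triangle k e13 e03 e01"
    if "triangle k e12 e02 e01" "triangle k e23 e13 e12" "triangle k e23 e03 e02" for e01 e02 e03 e12 e13 e23
    using assms that by (rule triangle_fill3_2)
  show "triangle k e23 e03 e02"
    if "triangle k e12 e02 e01" "triangle k e23 e13 e12" "triangle k e13 e03 e01" for e01 e02 e03 e12 e13 e23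
    using assms that by (rule triangle_fill3_1)
qed

definition bigon :: "nat \<Rightarrow> 'a \<Rightarrow> 'a \<Rightarrow> bool" where
  "bigon k f g \<longleftrightarrow> (\<exists>\<psi> \<in> Simp C (Suc n). face C n k \<psi> = f \<and> face C n (Suc k) \<psi> = g \<and>
      cst_faces_outside n {k, Suc k} \<psi>)"

definition homotopic :: "('a \<times> 'a) set" where
  "homotopic = {(f, g). f \<in> spheres \<and> g \<in> spheres \<and> triangle (n - 1) f g (cst C n c)}"

lemma bigon_iff_triangle_unit_right:
  assumes "k \<le> n - 1"
  shows "bigon k f g \<longleftrightarrow> triangle k f g (cst C n c)"
proof -
  have "{k, Suc k} = {k..<k + 3} - {Suc (Suc k)}" "Suc (Suc k) \<le> Suc n"
    using assms two_le_n by auto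
  then show ?thesis
    unfolding bigon_def triangle_def using cst_faces_outside_remove by metis
qed

lemma bigon_Suc_iff_triangle_unit_left:
  assumes "k \<le> n - 1"
  shows "bigon (Suc k) f g \<longleftrightarrow> triangle k (cst C n c) f g"
proof -
  have "{Suc k, Suc (Suc k)} = {k..<k + 3} - {k}" "k \<le> Suc n"
    using assms by auto
  then show ?thesis
    unfolding bigon_def triangle_def using cst_faces_outside_remove by metis
qed

lemma bigon_Suc_iff:
  assumes k: "k \<le> n - 1" and "f \<in> spheres" "g \<in> spheres"
  shows "bigon (Suc k) f g \<longleftrightarrow> bigon k g f"
proof -
  interpret loop_triangles spheres "triangle k" "cst C n c"
    by (rule loop_triangles_triangle[OF k])
  show ?thesis
    using bigon_iff_triangle_unit_right[OF k] bigon_Suc_iff_triangle_unit_left[OF k]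
      unit_triangle_iff assms by simp
qed

lemma bigon_sym:
  assumes k: "k \<le> n - 1" and "f \<in> spheres" "g \<in> spheres" "bigon k f g"
  shows "bigon k g f"
proof -
  interpret loop_triangles spheres "triangle k" "cst C n c"
    by (rule loop_triangles_triangle[OF k])
  show ?thesis
    using bigon_iff_triangle_unit_right[OF k] homotopic_sym assms by simp
qed

lemma bigon_iff_homotopic:
  assumes "k \<le> n" and f: "f \<in> spheres" and g: "g \<in> spheres"
  shows "bigon k f g \<longleftrightarrow> (f, g) \<in> homotopic"
proof -
  have "\<forall>f \<in> spheres. \<forall>g \<in> spheres. bigon k f g \<longleftrightarrow> bigon (n - 1) f g"
    using \<open>k \<le> n\<close>
  proof (induction k rule: inc_induct)
    case base
    show ?case
      using bigon_Suc_iff[of "n - 1"] bigon_sym[of "n - 1"] by (metis Suc_pred_n(1) order_refl)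
  next
    case (step m)
    then have "m \<le> n - 1"
      by simp
    then show ?case
      using step.IH bigon_Suc_iff[of m] bigon_sym[of "n - 1"] by (metis order_refl)
  qed
  then show ?thesis
    using f g bigon_iff_triangle_unit_right[of "n - 1"] unfolding homotopic_def by simp
qed

lemma homotopic_equiv: "equiv spheres homotopic"
proof -
  interpret loop_triangles spheres "triangle (n - 1)" "cst C n c"
    by (rule loop_triangles_triangle) simp
  show ?thesis
    unfolding equiv_def refl_on_def sym_def trans_def homotopic_def
    using degen0 homotopic_sym homotopic_trans by blast
qed

lemma spherical_Ce: "spherical (Ce C) n c = spheres"
proof (intro Set.set_eqI iffI)
  fix a assume a: "a \<in> spherical (Ce C) n c"
  have "face C (n - 1) j a = cst C (n - 1) c" if "j \<le> n" for j
    using a delta_face_boundary[of j "n - 1"] that unfolding spherical_def face_def Suc_pred_n by auto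
  then show "a \<in> spheres"
    using a unfolding spherical_def spheres_def cst_faces_outside_def Suc_pred_n by auto
next
  fix a assume "a \<in> spheres"
  then show "a \<in> spherical (Ce C) n c"
    unfolding spherical_def using sphere_simp sphere_boundary by auto
qed

context
  fixes a H
  assumes a: "a \<in> spheres" and H: "smap (sprod (Delta_min n) (Delta_t 1)) (Ce C) H"
    and H_boundary: "\<forall>m. \<forall>\<alpha> \<in> boundary n m. \<forall>\<gamma> \<in> ops m 1. H m (\<alpha>, \<gamma>) = Op C m n \<alpha> a"
begin

lemma homotopy_slice_sphere: "H n (idop n, step n k) \<in> spheres"
proof -
  have "face C (n - 1) j (H n (idop n, step n k)) = cst C (n - 1) c" if j: "j \<le> n" for j
  proof -
    have \<delta>: "delta_face (n - 1) j \<in> ops (n - 1) n" "delta_face (n - 1) j \<in> boundary n (n - 1)"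
      using delta_face_ops[of "n - 1" j] delta_face_boundary[of j "n - 1"] j by (simp_all add: Suc_pred_n)
    have "face C (n - 1) j (H n (idop n, step n k))
        = H (n - 1) (cmp (n - 1) (idop n) (delta_face (n - 1) j), cmp (n - 1) (step n k) (delta_face (n - 1) j))"
      unfolding face_def Suc_pred_n by (rule cylinder_map_op[OF H \<delta>(1) idop_ops step_ops, symmetric])
    also have "\<dots> = Op C (n - 1) n (delta_face (n - 1) j) a"
      using H_boundary \<delta> cmp_ops[OF step_ops \<delta>(1)] by (simp add: cmp_idop)
    also have "\<dots> = cst C (n - 1) c"
      by (rule sphere_boundary[OF a \<delta>(2)])
    finally show ?thesis .
  qed
  then show ?thesis
    using cylinder_map_simp[OF H idop_ops step_ops]
    unfolding spheres_def cst_faces_outside_def Suc_pred_n by auto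
qed

lemma homotopy_slices_bigon:
  assumes k: "k \<le> n"
  shows "bigon k (H n (idop n, step n k)) (H n (idop n, step n (Suc k)))"
proof -
  define \<psi> where "\<psi> = H (Suc n) (codegeneracy n k, step (Suc n) (Suc k))"
  have faces: "face C n j \<psi> = H n (cmp n (codegeneracy n k) (delta_face n j), cmp n (step (Suc n) (Suc k)) (delta_face n j))" for j
    unfolding face_def \<psi>_def
    by (rule cylinder_map_op[OF H delta_face_ops codegeneracy_ops[OF k] step_ops, symmetric])
  have "cst_faces_outside n {k, Suc k} \<psi>"
    unfolding cst_faces_outside_def
  proof (intro allI impI)
    fix j assume "j \<le> Suc n" "j \<notin> {k, Suc k}"
    then have bd: "cmp n (codegeneracy n k) (delta_face n j) \<in> boundary n n"
      using codegeneracy_delta_face_boundary[OF k] by simp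
    then show "face C n j \<psi> = cst C n c"
      unfolding faces using H_boundary cmp_ops[OF step_ops delta_face_ops] sphere_boundary[OF a] by simp
  qed
  moreover have "\<psi> \<in> Simp C (Suc n)"
    unfolding \<psi>_def by (rule cylinder_map_simp[OF H codegeneracy_ops[OF k] step_ops])
  moreover have "face C n k \<psi> = H n (idop n, step n k)" "face C n (Suc k) \<psi> = H n (idop n, step n (Suc k))"
    unfolding faces by (simp_all add: codegeneracy_delta_face step_delta_face)
  ultimately show ?thesis
    unfolding bigon_def by blast
qed

end

lemma htpy_imp_homotopic:
  assumes a: "a \<in> spheres" and b: "b \<in> spheres" and "htpy (Ce C) n a b"
  shows "(a, b) \<in> homotopic"
proof -
  obtain H where H: "smap (sprod (Delta_min n) (Delta_t 1)) (Ce C) H"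
    and H0: "\<forall>m. \<forall>\<alpha> \<in> ops m n. H m (\<alpha>, (\<lambda>i. 0)) = Op C m n \<alpha> a"
    and H1: "\<forall>m. \<forall>\<alpha> \<in> ops m n. H m (\<alpha>, (\<lambda>i. if i \<le> m then 1 else 0)) = Op C m n \<alpha> b"
    and H_boundary: "\<forall>m. \<forall>\<alpha> \<in> boundary n m. \<forall>\<gamma> \<in> ops m 1. H m (\<alpha>, \<gamma>) = Op C m n \<alpha> a"
    using \<open>htpy (Ce C) n a b\<close> unfolding htpy_def by auto
  let ?y = "\<lambda>k. H n (idop n, step n k)"
  have "(?y 0, ?y k) \<in> homotopic" if "k \<le> Suc n" for k
    using that
  proof (induction k)
    case 0
    then show ?case
      using homotopic_equiv homotopy_slice_sphere[OF a H H_boundary] unfolding equiv_def refl_on_def by blast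
  next
    case (Suc k)
    then have "(?y k, ?y (Suc k)) \<in> homotopic"
      using bigon_iff_homotopic homotopy_slices_bigon[OF a H H_boundary] homotopy_slice_sphere[OF a H H_boundary]
      by simp
    with Suc show ?case
      using homotopic_equiv unfolding equiv_def trans_def by auto
  qed
  moreover have "?y 0 = b" "?y (Suc n) = a"
    using H0 H1 idop_ops op_idop a b unfolding step_zero step_top by (simp_all add: sphere_simp)
  ultimately show ?thesis
    using homotopic_equiv unfolding equiv_def sym_def by auto
qed

context
  fixes \<psi>
  assumes \<psi>: "\<psi> \<in> Simp C (Suc n)" and \<psi>_faces: "cst_faces_outside n {n, Suc n} \<psi>"
begin

lemma prism_homotopy_cst:
  assumes "\<alpha> \<in> ops m n" "\<gamma> \<in> ops m 1" "v < n" "\<forall>i\<le>m. prism n m \<alpha> \<gamma> i \<noteq> v"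
  shows "Op C m (Suc n) (prism n m \<alpha> \<gamma>) \<psi> = cst C m c"
proof -
  have "face C n v \<psi> = cst C n c"
    using \<psi>_faces assms(3) unfolding cst_faces_outside_def by simp
  then show ?thesis
    using op_missing_cst_face[OF prism_ops[OF assms(1,2)] _ assms(4) \<psi>] assms(3) by simp
qed

lemma prism_homotopy_bottom:
  "\<alpha> \<in> ops m n \<Longrightarrow> Op C m (Suc n) (prism n m \<alpha> (\<lambda>i. 0)) \<psi> = Op C m n \<alpha> (face C n (Suc n) \<psi>)"
  unfolding face_def op_op[OF delta_face_ops _ \<psi>] by (simp add: prism_zero cmp_delta_face_top)

lemma prism_homotopy_top:
  "\<alpha> \<in> ops m n \<Longrightarrow>
   Op C m (Suc n) (prism n m \<alpha> (\<lambda>i. if i \<le> m then 1 else 0)) \<psi> = Op C m n \<alpha> (face C n n \<psi>)"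
  unfolding face_def op_op[OF delta_face_ops _ \<psi>] by (simp add: prism_one)

lemma prism_homotopy_boundary:
  assumes a: "face C n (Suc n) \<psi> \<in> spheres" and bd: "\<alpha> \<in> boundary n m" and \<gamma>: "\<gamma> \<in> ops m 1"
  shows "Op C m (Suc n) (prism n m \<alpha> \<gamma>) \<psi> = Op C m n \<alpha> (face C n (Suc n) \<psi>)"
proof -
  obtain v where \<alpha>: "\<alpha> \<in> ops m n" and v: "v \<le> n" "\<forall>i\<le>m. \<alpha> i \<noteq> v"
    using bd unfolding boundary_iff by blast
  show ?thesis
  proof (cases "v = n")
    case True
    then show ?thesis
      using prism_homotopy_bottom[OF \<alpha>] prism_avoiding_top[OF \<alpha>] v by simp
  next
    case False
    then have "Op C m (Suc n) (prism n m \<alpha> \<gamma>) \<psi> = cst C m c"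
      using prism_homotopy_cst[OF \<alpha> \<gamma> _ prism_misses[OF v(2)]] v(1) by simp
    then show ?thesis
      using sphere_boundary[OF a bd] by simp
  qed
qed

lemma prism_homotopy_thin:
  assumes q: "q \<in> Thin (sprod (Delta_min n) (Delta_t 1)) m"
  shows "Op C m (Suc n) (prism n m (fst q) (snd q)) \<psi> \<in> Thin (Ce C) m"
proof -
  have q_thin: "fst q \<in> degen_std n m" "snd q \<in> degen_std 1 m \<union> (if m = 1 then {idop 1} else {})"
    using q by (auto simp: sprod_def Delta_min_def Delta_t_def mem_Times_iff)
  have q_ops: "fst q \<in> ops m n" "snd q \<in> ops m 1"
    using q_thin idop_ops[of 1] by (auto simp: degen_std_def split: if_splits)
  have simp: "Op C m (Suc n) (prism n m (fst q) (snd q)) \<psi> \<in> Simp C m"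
    by (rule op_closed[OF prism_ops[OF q_ops] \<psi>])
  show ?thesis
  proof (cases "2 \<le> m")
    case True
    with simp show ?thesis by (simp add: thin_CeI)
  next
    case False
    moreover have "m \<noteq> 0"
      using q_thin(1) degen_std_0 by (metis empty_iff)
    ultimately have m: "m = 1" by simp
    have "fst q 0 = fst q 1"
      using degen_std_1_const q_thin(1) m by simp
    then obtain v where "v < n" "\<forall>i\<le>1. prism n 1 (fst q) (snd q) i \<noteq> v"
      using prism_degenerate_edge two_le_n by blast
    then have "Op C 1 (Suc n) (prism n 1 (fst q) (snd q)) \<psi> = cst C 1 c"
      using prism_homotopy_cst q_ops m by simp
    with simp m cst_edge_degenerate show ?thesis
      by (simp add: thin_CeI)
  qed
qed

lemma prism_homotopy_smap:
  "smap (sprod (Delta_min n) (Delta_t 1)) (Ce C) (\<lambda>m p. Op C m (Suc n) (prism n m (fst p) (snd p)) \<psi>)"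
  unfolding smap_def
proof (intro conjI allI impI)
  fix m q assume "q \<in> Simp (sprod (Delta_min n) (Delta_t 1)) m"
  then show "Op C m (Suc n) (prism n m (fst q) (snd q)) \<psi> \<in> Simp (Ce C) m"
    using op_closed[OF prism_ops \<psi>] by (simp add: sprod_def Delta_min_def Delta_t_def mem_Times_iff)
next
  fix m K \<beta> q assume \<beta>: "\<beta> \<in> ops m K" and q: "q \<in> Simp (sprod (Delta_min n) (Delta_t 1)) K"
  have q_ops: "fst q \<in> ops K n" "snd q \<in> ops K 1"
    using q by (auto simp: sprod_def Delta_min_def Delta_t_def mem_Times_iff)
  have "Op C m (Suc n) (prism n m (fst (Op (sprod (Delta_min n) (Delta_t 1)) m K \<beta> q))
          (snd (Op (sprod (Delta_min n) (Delta_t 1)) m K \<beta> q))) \<psi>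
      = Op C m (Suc n) (cmp m (prism n K (fst q) (snd q)) \<beta>) \<psi>"
    using prism_cmp[OF \<beta>] by (simp add: sprod_def Delta_min_def Delta_t_def)
  also have "\<dots> = Op C m K \<beta> (Op C K (Suc n) (prism n K (fst q) (snd q)) \<psi>)"
    by (rule op_op[OF prism_ops[OF q_ops] \<beta> \<psi>, symmetric])
  finally show "Op C m (Suc n) (prism n m (fst (Op (sprod (Delta_min n) (Delta_t 1)) m K \<beta> q))
          (snd (Op (sprod (Delta_min n) (Delta_t 1)) m K \<beta> q))) \<psi>
      = Op (Ce C) m K \<beta> (Op C K (Suc n) (prism n K (fst q) (snd q)) \<psi>)"
    by simp
next
  fix m q assume "q \<in> Thin (sprod (Delta_min n) (Delta_t 1)) m"
  then show "Op C m (Suc n) (prism n m (fst q) (snd q)) \<psi> \<in> Thin (Ce C) m"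
    by (rule prism_homotopy_thin)
qed

end

lemma bigon_imp_htpy:
  assumes a: "a \<in> spheres" and "bigon n b a"
  shows "htpy (Ce C) n a b"
proof -
  obtain \<psi> where \<psi>: "\<psi> \<in> Simp C (Suc n)" "face C n n \<psi> = b" "face C n (Suc n) \<psi> = a"
      "cst_faces_outside n {n, Suc n} \<psi>"
    using \<open>bigon n b a\<close> unfolding bigon_def by blast
  show ?thesis
    unfolding htpy_def
    using prism_homotopy_smap[OF \<psi>(1,4)] prism_homotopy_bottom[OF \<psi>(1,4)] prism_homotopy_top[OF \<psi>(1,4)]
      prism_homotopy_boundary[OF \<psi>(1,4)] a \<psi>(2,3)
    by (intro exI[of _ "\<lambda>m p. Op C m (Suc n) (prism n m (fst p) (snd p)) \<psi>"]) simp
qed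

lemma tau_equiv_Ce: "tau_equiv (Ce C) n c = homotopic"
proof -
  have sub: "homotopic \<subseteq> spheres \<times> spheres"
    using homotopic_equiv by (rule equiv_type)
  have htpy_iff: "a \<in> spheres \<Longrightarrow> b \<in> spheres \<Longrightarrow> htpy (Ce C) n a b \<longleftrightarrow> (a, b) \<in> homotopic" for a b
    using htpy_imp_homotopic bigon_imp_htpy bigon_iff_homotopic[of n b a] homotopic_equiv
    unfolding equiv_def sym_def by blast
  have R: "{(a, b). a \<in> spheres \<and> b \<in> spheres \<and> htpy (Ce C) n a b} = homotopic"
    using sub htpy_iff by auto
  have "homotopic \<union> homotopic\<inverse> = homotopic"
    using homotopic_equiv unfolding equiv_def sym_conv_converse_eq by blast
  moreover have "homotopic\<^sup>* = homotopic \<union> Id"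
    using homotopic_equiv unfolding equiv_def rtrancl_trancl_reflcl by auto
  ultimately show ?thesis
    unfolding tau_equiv_def spherical_Ce Let_def R using sub homotopic_equiv
    unfolding equiv_def refl_on_def by auto
qed

lemma triangle_top_iff:
  "triangle (n - 1) a p b \<longleftrightarrow> (\<exists>\<theta> \<in> Simp C (Suc n). face C n (n - 1) \<theta> = a \<and> face C n n \<theta> = p \<and>
     face C n (Suc n) \<theta> = b \<and> (\<forall>i \<le> Suc n. i \<notin> {n - 1, n, Suc n} \<longrightarrow> face C n i \<theta> = cst C n c))"
proof -
  have "{n - 1..<n - 1 + 3} = {n - 1, n, Suc n}"
    using two_le_n by auto
  then show ?thesis
    unfolding triangle_def cst_faces_outside_def Suc_pred_n by simp
qed

lemma yon_smap_Ce:
  assumes \<theta>: "\<theta> \<in> Simp C (Suc n)"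
  shows "smap (Delta_k n (Suc n)) (Ce C) (yon (Ce C) (Suc n) \<theta>)"
  unfolding smap_def
proof (intro conjI allI impI)
  fix m \<alpha> assume "\<alpha> \<in> Simp (Delta_k n (Suc n)) m"
  then show "yon (Ce C) (Suc n) \<theta> m \<alpha> \<in> Simp (Ce C) m"
    using op_closed \<theta> by (simp add: Delta_k_def yon_def)
next
  fix m K \<beta> \<alpha> assume "\<beta> \<in> ops m K" "\<alpha> \<in> Simp (Delta_k n (Suc n)) K"
  then show "yon (Ce C) (Suc n) \<theta> m (Op (Delta_k n (Suc n)) m K \<beta> \<alpha>) =
       Op (Ce C) m K \<beta> (yon (Ce C) (Suc n) \<theta> K \<alpha>)"
    using op_op[of \<alpha> K "Suc n" \<beta> m \<theta>] \<theta> by (simp add: Delta_k_def yon_def)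
next
  fix m \<alpha> assume \<alpha>: "\<alpha> \<in> Thin (Delta_k n (Suc n)) m"
  then have "\<alpha> \<in> ops m (Suc n)"
    by (auto simp: Delta_k_def degen_std_def)
  then have simp: "Op C m (Suc n) \<alpha> \<theta> \<in> Simp C m"
    using op_closed \<theta> by blast
  have "2 \<le> m \<or> degenerate C m (Op C m (Suc n) \<alpha> \<theta>)"
  proof (cases "2 \<le> m")
    case False
    then have deg: "\<alpha> \<in> degen_std (Suc n) m"
      using Delta_k_thin_low_dim[OF _ _ \<alpha>] two_le_n by simp
    moreover have "m \<noteq> 0"
      using deg degen_std_0 by (metis empty_iff)
    ultimately have "m = 1"
      using False by simp
    with deg show ?thesis
      using op_degen_std_1_degenerate \<theta> by simp
  qed simp
  with simp show "yon (Ce C) (Suc n) \<theta> m \<alpha> \<in> Thin (Ce C) m"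
    unfolding yon_def by (simp add: thin_CeI)
qed

lemma triangle_unique_up_to_homotopy:
  assumes aa': "(a, a') \<in> homotopic" and bb': "(b, b') \<in> homotopic"
    and p: "triangle (n - 1) a p b" and p': "triangle (n - 1) a' p' b'"
  shows "(p, p') \<in> homotopic"
proof -
  interpret loop_triangles spheres "triangle (n - 1)" "cst C n c"
    by (rule loop_triangles_triangle) simp
  have S: "a \<in> spheres" "a' \<in> spheres" "b \<in> spheres" "b' \<in> spheres"
    and "triangle (n - 1) a a' (cst C n c)" "triangle (n - 1) b b' (cst C n c)"
    using aa' bb' unfolding homotopic_def by auto
  then have a'a: "triangle (n - 1) a' a (cst C n c)" and b'b: "triangle (n - 1) b' b (cst C n c)"
    using homotopic_sym by blast+
  have p_sphere: "p \<in> spheres" and p'_sphere: "p' \<in> spheres"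
    using triangle_middle_sphere[OF order_refl] S p p' by blast+
  have "triangle (n - 1) a p' b'"
    by (rule triangle_homotopic_left[OF S(2,1) p'_sphere S(4) p' a'a])
  then have "triangle (n - 1) a p' b"
    by (rule triangle_homotopic_right[OF S(1) p'_sphere S(4,3) _ b'b])
  then have "triangle (n - 1) p p' (cst C n c)"
    by (rule composite_unique[OF S(1) p_sphere p'_sphere S(3) p])
  then show ?thesis
    unfolding homotopic_def using p_sphere p'_sphere by simp
qed

lemma tau_mult_Ce:
  assumes a: "a \<in> spheres" and b: "b \<in> spheres" and p: "triangle (n - 1) a p b"
  shows "tau_mult (Ce C) n c (homotopic `` {a}) (homotopic `` {b}) = homotopic `` {p}"
proof -
  let ?P = "\<lambda>Cl. \<exists>a' \<in> homotopic `` {a}. \<exists>b' \<in> homotopic `` {b}. \<exists>\<theta> \<in> Simp (Ce C) (Suc n).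
      smap (Delta_k n (Suc n)) (Ce C) (yon (Ce C) (Suc n) \<theta>) \<and>
      face (Ce C) n (n - 1) \<theta> = a' \<and> face (Ce C) n (Suc n) \<theta> = b' \<and>
      (\<forall>i \<le> Suc n. i \<notin> {n - 1, n, Suc n} \<longrightarrow> face (Ce C) n i \<theta> = cst (Ce C) n c) \<and>
      Cl = tau_equiv (Ce C) n c `` {face (Ce C) n n \<theta>}"
  have ex: "?P (homotopic `` {p})"
  proof -
    obtain \<theta> where \<theta>: "\<theta> \<in> Simp C (Suc n)" "face C n (n - 1) \<theta> = a" "face C n n \<theta> = p"
        "face C n (Suc n) \<theta> = b" "\<forall>i \<le> Suc n. i \<notin> {n - 1, n, Suc n} \<longrightarrow> face C n i \<theta> = cst C n c"
      using p unfolding triangle_top_iff by blast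
    have "a \<in> homotopic `` {a}" "b \<in> homotopic `` {b}"
      using a b homotopic_equiv unfolding equiv_def refl_on_def by auto
    then show ?thesis
      using \<theta> yon_smap_Ce[OF \<theta>(1)]
      by (intro bexI[of _ a] bexI[of _ b] bexI[of _ \<theta>]) (simp_all add: tau_equiv_Ce)
  qed
  have unique: "Cl = homotopic `` {p}" if "?P Cl" for Cl
  proof -
    obtain a' b' \<theta> where "(a, a') \<in> homotopic" "(b, b') \<in> homotopic" "\<theta> \<in> Simp (Ce C) (Suc n)"
        "face (Ce C) n (n - 1) \<theta> = a'" "face (Ce C) n (Suc n) \<theta> = b'"
        "\<forall>i \<le> Suc n. i \<notin> {n - 1, n, Suc n} \<longrightarrow> face (Ce C) n i \<theta> = cst (Ce C) n c"
        and Cl: "Cl = tau_equiv (Ce C) n c `` {face (Ce C) n n \<theta>}"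
      using \<open>?P Cl\<close> by blast
    then have "triangle (n - 1) a' (face C n n \<theta>) b'"
      unfolding triangle_top_iff by (intro bexI[of _ \<theta>]) simp_all
    then have "(p, face C n n \<theta>) \<in> homotopic"
      using triangle_unique_up_to_homotopy \<open>(a, a') \<in> homotopic\<close> \<open>(b, b') \<in> homotopic\<close> p by blast
    then show ?thesis
      using Cl equiv_class_eq[OF homotopic_equiv] by (simp add: tau_equiv_Ce)
  qed
  show ?thesis
    unfolding tau_mult_def by (rule someI2[of ?P, OF ex unique])
qed

lemma carrier_tau_Ce: "carrier (tau (Ce C) n c) = spheres // homotopic"
  by (simp add: tau_def spherical_Ce tau_equiv_Ce)

lemma one_tau_Ce: "\<one>\<^bsub>tau (Ce C) n c\<^esub> = homotopic `` {cst C n c}"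
  by (simp add: tau_def tau_equiv_Ce)

lemma mult_tau_Ce:
  "a \<in> spheres \<Longrightarrow> b \<in> spheres \<Longrightarrow> triangle (n - 1) a p b \<Longrightarrow>
   homotopic `` {a} \<otimes>\<^bsub>tau (Ce C) n c\<^esub> homotopic `` {b} = homotopic `` {p}"
  using tau_mult_Ce by (simp add: tau_def)

lemma tau_Ce_elem:
  assumes "X \<in> carrier (tau (Ce C) n c)"
  obtains a where "a \<in> spheres" "X = homotopic `` {a}"
  using assms unfolding carrier_tau_Ce by (auto elim: quotientE)

lemma tau_Ce_class: "a \<in> spheres \<Longrightarrow> homotopic `` {a} \<in> carrier (tau (Ce C) n c)"
  unfolding carrier_tau_Ce by (rule quotientI)

lemma mult_tau_Ce_assoc:
  assumes x: "x \<in> spheres" and y: "y \<in> spheres" and z: "z \<in> spheres"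
  shows "homotopic `` {x} \<otimes>\<^bsub>tau (Ce C) n c\<^esub> homotopic `` {y} \<otimes>\<^bsub>tau (Ce C) n c\<^esub> homotopic `` {z} =
    homotopic `` {x} \<otimes>\<^bsub>tau (Ce C) n c\<^esub> (homotopic `` {y} \<otimes>\<^bsub>tau (Ce C) n c\<^esub> homotopic `` {z})"
proof -
  interpret loop_triangles spheres "triangle (n - 1)" "cst C n c"
    by (rule loop_triangles_triangle) simp
  obtain r where r: "r \<in> spheres" "triangle (n - 1) x r y"
    using fill2 x y by blast
  obtain p where p: "p \<in> spheres" "triangle (n - 1) y p z"
    using fill2 y z by blast
  obtain q where q: "q \<in> spheres" "triangle (n - 1) x q p"
    using fill2 x p by blast
  have rq: "triangle (n - 1) r q z"
    by (rule composite_assoc[OF x y z p(1) q(1) r(1) p(2) q(2) r(2)])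
  show ?thesis
    unfolding mult_tau_Ce[OF x y r(2)] mult_tau_Ce[OF y z p(2)]
      mult_tau_Ce[OF r(1) z rq] mult_tau_Ce[OF x p(1) q(2)] ..
qed

lemma tau_group: "group (tau (Ce C) n c)"
proof (rule groupI)
  fix X Y assume "X \<in> carrier (tau (Ce C) n c)" "Y \<in> carrier (tau (Ce C) n c)"
  then obtain a b where a: "a \<in> spheres" "X = homotopic `` {a}" and b: "b \<in> spheres" "Y = homotopic `` {b}"
    using tau_Ce_elem by metis
  then obtain p where p: "p \<in> spheres" "triangle (n - 1) a p b"
    using triangle_fill2[of "n - 1"] by auto
  show "X \<otimes>\<^bsub>tau (Ce C) n c\<^esub> Y \<in> carrier (tau (Ce C) n c)"
    unfolding a(2) b(2) mult_tau_Ce[OF a(1) b(1) p(2)] by (rule tau_Ce_class[OF p(1)])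
next
  show "\<one>\<^bsub>tau (Ce C) n c\<^esub> \<in> carrier (tau (Ce C) n c)"
    unfolding one_tau_Ce by (rule tau_Ce_class[OF cst_sphere])
next
  fix X Y Z assume "X \<in> carrier (tau (Ce C) n c)" "Y \<in> carrier (tau (Ce C) n c)"
    "Z \<in> carrier (tau (Ce C) n c)"
  then obtain x y z where "x \<in> spheres" "X = homotopic `` {x}" "y \<in> spheres" "Y = homotopic `` {y}"
      "z \<in> spheres" "Z = homotopic `` {z}"
    using tau_Ce_elem by metis
  then show "X \<otimes>\<^bsub>tau (Ce C) n c\<^esub> Y \<otimes>\<^bsub>tau (Ce C) n c\<^esub> Z =
      X \<otimes>\<^bsub>tau (Ce C) n c\<^esub> (Y \<otimes>\<^bsub>tau (Ce C) n c\<^esub> Z)"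
    using mult_tau_Ce_assoc by simp
next
  fix X assume "X \<in> carrier (tau (Ce C) n c)"
  then obtain x where x: "x \<in> spheres" "X = homotopic `` {x}"
    by (rule tau_Ce_elem)
  show "\<one>\<^bsub>tau (Ce C) n c\<^esub> \<otimes>\<^bsub>tau (Ce C) n c\<^esub> X = X"
    unfolding one_tau_Ce x(2) by (rule mult_tau_Ce[OF cst_sphere x(1) triangle_degen1[OF order_refl x(1)]])
next
  fix X assume "X \<in> carrier (tau (Ce C) n c)"
  then obtain x where x: "x \<in> spheres" "X = homotopic `` {x}"
    by (rule tau_Ce_elem)
  then obtain y where y: "y \<in> spheres" "triangle (n - 1) y (cst C n c) x"
    using triangle_left_inverse by blast
  have "homotopic `` {y} \<otimes>\<^bsub>tau (Ce C) n c\<^esub> X = \<one>\<^bsub>tau (Ce C) n c\<^esub>"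
    unfolding one_tau_Ce x(2) by (rule mult_tau_Ce[OF y(1) x(1) y(2)])
  then show "\<exists>Y \<in> carrier (tau (Ce C) n c). Y \<otimes>\<^bsub>tau (Ce C) n c\<^esub> X = \<one>\<^bsub>tau (Ce C) n c\<^esub>"
    using tau_Ce_class[OF y(1)] by blast
qed

end

theorem mainTheorem7:
  fixes C :: "'a sset" and c :: 'a and n :: nat
  assumes "quasi_category C" and "c \<in> Simp C 0" and "2 \<le> n"
  shows "group (tau (Ce C) n c)"
proof -
  interpret qcat_sphere C c n
    by unfold_locales (use assms in \<open>simp_all add: quasi_category_def\<close>)
  show ?thesis
    by (rule tau_group)
qed

end
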